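(* Let $k \in \mathbb{N}$ with $k > 3$. Then $$\max\left\{1, \left\lceil\frac{k}{4}\right\rceil - 1\right\} \leq q(k) < \begin{cases} \frac{k}{3} & \text{if } k \bmod 3 = 0,\\ \left\lceil\frac{k}{2}\right\rceil & \text{otherwise.}\end{cases}$$
   Context: For a graph $G$ with an edge-colouring $f\colon E(G)\to\{1,\dots,k\}$ and $1\le j\le k$: $e_j[v]$ is the number of edges coloured $j$ in the subgraph induced by the closed neighbourhood $N[v]$ of $v$, and $\deg_j(v)$ is the number of edges coloured $j$ incident to $v$. Given a strictly increasing sequence of positive integers $(a_1,\dots,a_k)$, a $d$-regular graph $G$ with $d=\sum_j a_j$ is an $(a_1,\dots,a_k)$-flip graph if there is an edge-colouring with colours $\{1,\dots,k\}$ such that $\deg_j(v)=a_j$ for all vertices $v$ and all $j$, and $e_k[v]<e_{k-1}[v]<\dots<e_1[v]$ for every vertex $v$; the sequence is then a $k$-flip sequence. For $k\ge 2$, call an index $q\in\{1,\dots,k-1\}$ admissible if there exists $h\in\mathbb{N}$ such that for every $N\in\mathbb{N}$ there is a $k$-flip sequence $(a_1,\dots,a_k)$ with $a_q=h$ and $a_k>N$. $q(k)$ denotes the largest admissible index (the upper bound asserts that every admissible index is below the stated value). *)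

theory Defs
  imports Complex_Main
begin

definition simple_graph :: "nat set \<Rightarrow> nat set set \<Rightarrow> bool" where
  "simple_graph V E \<longleftrightarrow> finite V \<and>
     (\<forall>e\<in>E. \<exists>u v. u \<noteq> v \<and> u \<in> V \<and> v \<in> V \<and> e = {u, v})"

definition closed_nbhd :: "nat set set \<Rightarrow> nat \<Rightarrow> nat set" where
  "closed_nbhd E v = insert v {u. {u, v} \<in> E}"

definition degree :: "nat set set \<Rightarrow> nat \<Rightarrow> nat" where
  "degree E v = card {e\<in>E. v \<in> e}"

definition regular :: "nat set \<Rightarrow> nat set set \<Rightarrow> nat \<Rightarrow> bool" where
  "regular V E d \<longleftrightarrow> (\<forall>v\<in>V. degree E v = d)"

definition col_deg :: "nat set set \<Rightarrow> (nat set \<Rightarrow> nat) \<Rightarrow> nat \<Rightarrow> nat \<Rightarrow> nat" where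
  "col_deg E f j v = card {e\<in>E. v \<in> e \<and> f e = j}"

definition col_nbhd_edges :: "nat set set \<Rightarrow> (nat set \<Rightarrow> nat) \<Rightarrow> nat \<Rightarrow> nat \<Rightarrow> nat" where
  "col_nbhd_edges E f j v = card {e\<in>E. e \<subseteq> closed_nbhd E v \<and> f e = j}"

text \<open>A sequence (a_1,...,a_k) is represented by a function a on indices 1..k.\<close>
definition incr_pos_seq :: "nat \<Rightarrow> (nat \<Rightarrow> nat) \<Rightarrow> bool" where
  "incr_pos_seq k a \<longleftrightarrow> (\<forall>j\<in>{1..k}. 0 < a j) \<and> (\<forall>j\<in>{1..<k}. a j < a (Suc j))"

definition flip_graph :: "nat \<Rightarrow> (nat \<Rightarrow> nat) \<Rightarrow> nat set \<Rightarrow> nat set set \<Rightarrow> bool" where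
  "flip_graph k a V E \<longleftrightarrow> incr_pos_seq k a \<and> simple_graph V E \<and> V \<noteq> {} \<and>
     regular V E (\<Sum>j=1..k. a j) \<and>
     (\<exists>f. (\<forall>e\<in>E. f e \<in> {1..k}) \<and>
          (\<forall>v\<in>V. \<forall>j\<in>{1..k}. col_deg E f j v = a j) \<and>
          (\<forall>v\<in>V. \<forall>j\<in>{1..<k}. col_nbhd_edges E f (Suc j) v < col_nbhd_edges E f j v))"

definition flip_seq :: "nat \<Rightarrow> (nat \<Rightarrow> nat) \<Rightarrow> bool" where
  "flip_seq k a \<longleftrightarrow> (\<exists>V E. flip_graph k a V E)"

definition admissible :: "nat \<Rightarrow> nat \<Rightarrow> bool" where
  "admissible k q \<longleftrightarrow> 1 \<le> q \<and> q \<le> k - 1 \<and>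
     (\<exists>h::nat. \<forall>N::nat. \<exists>a. flip_seq k a \<and> a q = h \<and> a k > N)"

definition q_max :: "nat \<Rightarrow> nat" where
  "q_max k = Max {q. admissible k q}"

end

theory Submission
  imports Defs
begin

(* In a flip graph let C_j(v) be the number of j-coloured edges spanned by the open
   neighbourhood of v, so that e_j[v] = a_j + C_j(v).  If k <= 3q, the chain e_k[v] < ... < e_1[v]
   gives  sum_{i>q} C_i(v) <= 2 sum_{j<=q} C_j(v) + 2 a_q - a_k  at every vertex.  On the other
   hand, a low-coloured edge yz in N(v) whose spokes vy, vz are both high-coloured yields the
   high-coloured edges vz in N(y) and vy in N(z); together with the bound (a_1 + ... + a_q)^2 per
   vertex for the remaining low-coloured edges this gives
     2 sum_v sum_{j<=q} C_j(v) <= sum_v sum_{i>q} C_i(v) + 2 |V| (a_1 + ... + a_q)^2.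
   Hence a_k <= 2 a_q + 2 (q a_q)^2, so a_q cannot stay fixed while a_k grows: every admissible q
   satisfies 3q < k.

   In the Cayley graph of (P(X), symmetric difference) with a generating set D, where
   the edge {A, A + d} gets the colour of d, every vertex has a_j incident edges of colour j, the
   number of generators of that colour, and e_j[v] = a_j + #{{d1, d2} in D : d1 + d2 in D has
   colour j}.  For 1 <= q with 11q < 3k we choose D so that a_q = q + 3 while a_k exceeds any given
   bound. *)

section \<open>Graphs over an arbitrary vertex type\<close>

(* The notions of Defs over an arbitrary vertex type, so that the lower-bound graph can live on
   sets of atoms. *)
definition simple_graph' :: "'v set \<Rightarrow> 'v set set \<Rightarrow> bool" where
  "simple_graph' V E \<longleftrightarrow> finite V \<and> (\<forall>e\<in>E. \<exists>u v. u \<noteq> v \<and> u \<in> V \<and> v \<in> V \<and> e = {u, v})"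

definition closed_nbhd' :: "'v set set \<Rightarrow> 'v \<Rightarrow> 'v set" where
  "closed_nbhd' E v = insert v {u. {u, v} \<in> E}"

definition col_deg' :: "'v set set \<Rightarrow> ('v set \<Rightarrow> nat) \<Rightarrow> nat \<Rightarrow> 'v \<Rightarrow> nat" where
  "col_deg' E f j v = card {e\<in>E. v \<in> e \<and> f e = j}"

definition col_nbhd_edges' :: "'v set set \<Rightarrow> ('v set \<Rightarrow> nat) \<Rightarrow> nat \<Rightarrow> 'v \<Rightarrow> nat" where
  "col_nbhd_edges' E f j v = card {e\<in>E. e \<subseteq> closed_nbhd' E v \<and> f e = j}"

lemma graph_notions_nat:
  "simple_graph' = simple_graph" "closed_nbhd' = closed_nbhd"
  "col_deg' = col_deg" "col_nbhd_edges' = col_nbhd_edges"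
  by (simp_all add: fun_eq_iff simple_graph'_def simple_graph_def closed_nbhd'_def
      closed_nbhd_def col_deg'_def col_deg_def col_nbhd_edges'_def col_nbhd_edges_def)

definition nbhd :: "'v set set \<Rightarrow> 'v \<Rightarrow> 'v set" where
  "nbhd E v = {u. {u, v} \<in> E}"

definition nbhd_edges :: "'v set set \<Rightarrow> ('v set \<Rightarrow> nat) \<Rightarrow> nat set \<Rightarrow> 'v \<Rightarrow> 'v set set" where
  "nbhd_edges E f J v = {e\<in>E. e \<subseteq> nbhd E v \<and> f e \<in> J}"

lemma simple_graph'_edge_at:
  assumes "simple_graph' V E" "e \<in> E" "y \<in> e"
  shows "\<exists>z. z \<noteq> y \<and> e = {y, z} \<and> y \<in> V \<and> z \<in> V"
  using assms unfolding simple_graph'_def by (auto simp: insert_commute)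

lemma simple_graph'_edges_Pow:
  assumes "simple_graph' V E"
  shows "E \<subseteq> Pow V"
proof
  fix e assume "e \<in> E"
  with assms obtain u w where "u \<in> V" "w \<in> V" "e = {u, w}" unfolding simple_graph'_def by blast
  then show "e \<in> Pow V" by simp
qed

lemma simple_graph'_finite_edges:
  assumes "simple_graph' V E"
  shows "finite E"
proof -
  have "finite (Pow V)" using assms by (simp add: simple_graph'_def)
  then show ?thesis using simple_graph'_edges_Pow[OF assms] by (rule finite_subset[rotated])
qed

lemma simple_graph'_card_edge: "simple_graph' V E \<Longrightarrow> e \<in> E \<Longrightarrow> card e = 2"
  unfolding simple_graph'_def by auto

lemma nbhd_symmetric: "u \<in> nbhd E v \<longleftrightarrow> v \<in> nbhd E u"
  unfolding nbhd_def by (simp add: insert_commute)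

lemma col_nbhd_edges'_split:
  assumes s: "simple_graph' V E"
  shows "col_nbhd_edges' E f j v = col_deg' E f j v + card (nbhd_edges E f {j} v)"
proof -
  have v: "v \<notin> nbhd E v"
    using simple_graph'_card_edge[OF s, of "{v}"] by (auto simp: nbhd_def)
  then have disj: "{e\<in>E. v \<in> e \<and> f e = j} \<inter> nbhd_edges E f {j} v = {}"
    unfolding nbhd_edges_def by auto
  have eq: "{e\<in>E. e \<subseteq> closed_nbhd' E v \<and> f e = j} = {e\<in>E. v \<in> e \<and> f e = j} \<union> nbhd_edges E f {j} v"
  proof (intro set_eqI iffI)
    fix e assume e: "e \<in> {e\<in>E. e \<subseteq> closed_nbhd' E v \<and> f e = j}"
    show "e \<in> {e\<in>E. v \<in> e \<and> f e = j} \<union> nbhd_edges E f {j} v"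
    proof (cases "v \<in> e")
      case False
      then show ?thesis using e by (auto simp: closed_nbhd'_def nbhd_edges_def nbhd_def)
    qed (use e in blast)
  next
    fix e assume e: "e \<in> {e\<in>E. v \<in> e \<and> f e = j} \<union> nbhd_edges E f {j} v"
    show "e \<in> {e\<in>E. e \<subseteq> closed_nbhd' E v \<and> f e = j}"
    proof (cases "v \<in> e")
      case True
      then have e': "e \<in> E" "f e = j" using e v by (auto simp: nbhd_edges_def)
      then obtain z where z: "e = {v, z}" using simple_graph'_edge_at[OF s _ True] by blast
      then have "{z, v} \<in> E" using e' by (simp add: insert_commute)
      then show ?thesis using e' z by (auto simp: closed_nbhd'_def)
    next
      case False
      then have "e \<in> nbhd_edges E f {j} v" using e by blast
      then show ?thesis by (auto simp: nbhd_edges_def closed_nbhd'_def nbhd_def)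
    qed
  qed
  have "finite E" using simple_graph'_finite_edges[OF s] .
  then have "finite {e\<in>E. v \<in> e \<and> f e = j}" "finite (nbhd_edges E f {j} v)"
    by (simp_all add: nbhd_edges_def)
  from card_Un_disjoint[OF this disj] show ?thesis
    unfolding col_nbhd_edges'_def col_deg'_def eq .
qed

lemma sum_card_fibres:
  assumes "finite A" "finite J"
  shows "(\<Sum>j\<in>J. card {e\<in>A. f e = j}) = card {e\<in>A. f e \<in> J}"
proof -
  have "card (\<Union>j\<in>J. {e\<in>A. f e = j}) = (\<Sum>j\<in>J. card {e\<in>A. f e = j})"
    by (rule card_UN_disjoint) (use assms in auto)
  moreover have "(\<Union>j\<in>J. {e\<in>A. f e = j}) = {e\<in>A. f e \<in> J}" by auto
  ultimately show ?thesis by simp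
qed

definition flip_graph' :: "nat \<Rightarrow> (nat \<Rightarrow> nat) \<Rightarrow> 'v set \<Rightarrow> 'v set set \<Rightarrow> bool" where
  "flip_graph' k a V E \<longleftrightarrow> incr_pos_seq k a \<and> simple_graph' V E \<and> V \<noteq> {} \<and>
     (\<forall>v\<in>V. card {e\<in>E. v \<in> e} = (\<Sum>j=1..k. a j)) \<and>
     (\<exists>f. (\<forall>e\<in>E. f e \<in> {1..k}) \<and>
          (\<forall>v\<in>V. \<forall>j\<in>{1..k}. col_deg' E f j v = a j) \<and>
          (\<forall>v\<in>V. \<forall>j\<in>{1..<k}. col_nbhd_edges' E f (Suc j) v < col_nbhd_edges' E f j v))"

lemma card_filter_image:
  assumes "inj_on G E"
  shows "card {x\<in>G ` E. P x} = card {e\<in>E. P (G e)}"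
proof -
  have "{x\<in>G ` E. P x} = G ` {e\<in>E. P (G e)}" by auto
  moreover have "inj_on G {e\<in>E. P (G e)}" using assms by (auto intro: inj_on_subset)
  ultimately show ?thesis by (simp add: card_image)
qed

lemma simple_graph'_image:
  assumes s: "simple_graph' V E" and g: "inj_on g V"
  shows "simple_graph' (g ` V) (image g ` E)"
  unfolding simple_graph'_def
proof (intro conjI ballI)
  show "finite (g ` V)" using s by (simp add: simple_graph'_def)
  fix e' assume "e' \<in> image g ` E"
  then obtain u w where uw: "u \<noteq> w" "u \<in> V" "w \<in> V" "e' = {g u, g w}"
    using s unfolding simple_graph'_def by auto
  moreover have "g u \<noteq> g w" using inj_on_contraD[OF g uw(1-3)] .
  ultimately show "\<exists>x y. x \<noteq> y \<and> x \<in> g ` V \<and> y \<in> g ` V \<and> e' = {x, y}" by blast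
qed

lemma closed_nbhd'_image:
  assumes s: "simple_graph' V E" and g: "inj_on g V" and v: "v \<in> V"
  shows "closed_nbhd' (image g ` E) (g v) = g ` closed_nbhd' E v"
proof -
  have "{u'. {u', g v} \<in> image g ` E} = g ` {u. {u, v} \<in> E}"
  proof (intro set_eqI iffI)
    fix u' assume "u' \<in> {u'. {u', g v} \<in> image g ` E}"
    then obtain e where e: "e \<in> E" "{u', g v} = g ` e" by auto
    then obtain x y where xy: "x \<in> V" "y \<in> V" "e = {x, y}"
      using s unfolding simple_graph'_def by blast
    then have "g v \<in> {g x, g y}" using e by auto
    then have "v = x \<or> v = y" using g v xy by (auto dest: inj_onD)
    then show "u' \<in> g ` {u. {u, v} \<in> E}"
      using e xy by (auto simp: doubleton_eq_iff insert_commute)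
  next
    fix u' assume "u' \<in> g ` {u. {u, v} \<in> E}"
    then obtain u where "{u, v} \<in> E" "u' = g u" by auto
    then show "u' \<in> {u'. {u', g v} \<in> image g ` E}" by (auto intro: image_eqI[where x = "{u, v}"])
  qed
  then show ?thesis unfolding closed_nbhd'_def by simp
qed

lemma
  assumes s: "simple_graph' V E" and g: "inj_on g V" and v: "v \<in> V"
    and f': "\<And>e. e \<in> E \<Longrightarrow> f' (g ` e) = f e"
  shows card_edges_at_image: "card {e'\<in>image g ` E. g v \<in> e'} = card {e\<in>E. v \<in> e}"
    and col_deg'_image: "col_deg' (image g ` E) f' j (g v) = col_deg' E f j v"
    and col_nbhd_edges'_image: "col_nbhd_edges' (image g ` E) f' j (g v) = col_nbhd_edges' E f j v"
proof -
  have EP: "E \<subseteq> Pow V" by (rule simple_graph'_edges_Pow[OF s])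
  have card_E': "card {e'\<in>image g ` E. P e'} = card {e\<in>E. P (g ` e)}" for P
    using inj_on_subset[OF inj_on_image_Pow[OF g] EP] by (rule card_filter_image)
  have mem: "g v \<in> g ` e \<longleftrightarrow> v \<in> e" if "e \<in> E" for e
    using inj_on_image_mem_iff[OF g v] EP that by blast
  have N: "closed_nbhd' E v \<subseteq> V" using EP v unfolding closed_nbhd'_def by auto
  have sub: "g ` e \<subseteq> g ` closed_nbhd' E v \<longleftrightarrow> e \<subseteq> closed_nbhd' E v" if "e \<in> E" for e
  proof -
    have "g x \<in> g ` closed_nbhd' E v \<longleftrightarrow> x \<in> closed_nbhd' E v" if "x \<in> e" for x
      using inj_on_image_mem_iff[OF g _ N] EP \<open>e \<in> E\<close> that by blast
    then show ?thesis unfolding image_subset_iff subset_iff by blast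
  qed
  show "card {e'\<in>image g ` E. g v \<in> e'} = card {e\<in>E. v \<in> e}"
    unfolding card_E' using mem by (intro arg_cong[where f = card]) auto
  show "col_deg' (image g ` E) f' j (g v) = col_deg' E f j v"
    unfolding col_deg'_def card_E' using mem f' by (intro arg_cong[where f = card]) auto
  show "col_nbhd_edges' (image g ` E) f' j (g v) = col_nbhd_edges' E f j v"
    unfolding col_nbhd_edges'_def card_E' closed_nbhd'_image[OF s g v]
    using sub f' by (intro arg_cong[where f = card]) auto
qed

lemma flip_graph'_imp_flip_seq:
  assumes fg: "flip_graph' k a V E"
  shows "flip_seq k a"
proof -
  obtain f where col: "\<forall>e\<in>E. f e \<in> {1..k}"
    and deg: "\<forall>v\<in>V. \<forall>j\<in>{1..k}. col_deg' E f j v = a j"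
    and flip: "\<forall>v\<in>V. \<forall>j\<in>{1..<k}. col_nbhd_edges' E f (Suc j) v < col_nbhd_edges' E f j v"
    using fg unfolding flip_graph'_def by blast
  have s: "simple_graph' V E" and V: "V \<noteq> {}" and inc: "incr_pos_seq k a"
    and reg: "\<forall>v\<in>V. card {e\<in>E. v \<in> e} = (\<Sum>j=1..k. a j)"
    using fg unfolding flip_graph'_def by blast+
  have "finite V" using s by (simp add: simple_graph'_def)
  then obtain g :: "_ \<Rightarrow> nat" where g: "inj_on g V"
    using finite_imp_inj_to_nat_seg by meson
  define f' where "f' e' = f (inv_into V g ` e')" for e'
  have f': "f' (g ` e) = f e" if "e \<in> E" for e
    unfolding f'_def using inv_into_image_cancel[OF g] simple_graph'_edges_Pow[OF s] that by auto
  note image_facts = card_edges_at_image[where f' = f' and f = f, OF s g _ f']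
    col_deg'_image[where f' = f' and f = f, OF s g _ f']
    col_nbhd_edges'_image[where f' = f' and f = f, OF s g _ f']
  have "flip_graph k a (g ` V) (image g ` E)"
    using simple_graph'_image[OF s g] flip V inc reg deg col f'
    unfolding flip_graph_def graph_notions_nat[symmetric] regular_def degree_def
    by (intro conjI exI[of _ f']) (auto simp: image_facts)
  then show ?thesis unfolding flip_seq_def by blast
qed

section \<open>An upper bound for admissible indices\<close>

lemma card_nbrs_eq_card_edges_at:
  assumes s: "simple_graph' V E"
  shows "card {u. {w, u} \<in> E \<and> P {w, u}} = card {e\<in>E. w \<in> e \<and> P e}"
proof -
  have "{e\<in>E. w \<in> e \<and> P e} = (\<lambda>u. {w, u}) ` {u. {w, u} \<in> E \<and> P {w, u}}"
    using simple_graph'_edge_at[OF s] by auto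
  moreover have "inj_on (\<lambda>u. {w, u}) A" for A
    by (rule inj_onI) (metis doubleton_eq_iff)
  ultimately show ?thesis by (simp add: card_image)
qed

lemma card_nbhd_edges_spoke_inside_le:
  assumes s: "simple_graph' V E" and v: "v \<in> V"
    and deg: "\<forall>w\<in>V. card {e\<in>E. w \<in> e \<and> f e \<in> L} = d"
  shows "card {e\<in>nbhd_edges E f L v. \<exists>u\<in>e. f {v, u} \<in> L} \<le> d * d"
proof -
  define N where "N w = {u. {w, u} \<in> E \<and> f {w, u} \<in> L}" for w
  have N_V: "N w \<subseteq> V" for w
    using simple_graph'_edges_Pow[OF s] unfolding N_def by blast
  have card_N: "card (N w) = d" if "w \<in> V" for w
    using card_nbrs_eq_card_edges_at[OF s, of w "\<lambda>e. f e \<in> L"] deg that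
    unfolding N_def by simp
  have fin_N: "finite (N w)" for w
    using finite_subset[OF N_V] s unfolding simple_graph'_def by blast
  have "{e\<in>nbhd_edges E f L v. \<exists>u\<in>e. f {v, u} \<in> L} \<subseteq> (\<Union>u\<in>N v. (\<lambda>z. {u, z}) ` N u)"
  proof
    fix e assume e: "e \<in> {e\<in>nbhd_edges E f L v. \<exists>u\<in>e. f {v, u} \<in> L}"
    then obtain u where u: "u \<in> e" "f {v, u} \<in> L" and eE: "e \<in> E" "f e \<in> L"
      and e_nbhd: "e \<subseteq> nbhd E v" unfolding nbhd_edges_def by blast
    obtain z where z: "e = {u, z}" using simple_graph'_edge_at[OF s eE(1) u(1)] by blast
    have "{u, v} \<in> E" using u e_nbhd unfolding nbhd_def by blast
    then have "u \<in> N v" using u by (simp add: N_def insert_commute)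
    moreover have "z \<in> N u" using eE z by (simp add: N_def)
    ultimately show "e \<in> (\<Union>u\<in>N v. (\<lambda>z. {u, z}) ` N u)" using z by blast
  qed
  then have "card {e\<in>nbhd_edges E f L v. \<exists>u\<in>e. f {v, u} \<in> L}
      \<le> card (\<Union>u\<in>N v. (\<lambda>z. {u, z}) ` N u)"
    by (rule card_mono[rotated]) (simp add: fin_N)
  also have "\<dots> \<le> (\<Sum>u\<in>N v. card ((\<lambda>z. {u, z}) ` N u))"
    by (rule card_UN_le[OF fin_N])
  also have "\<dots> \<le> (\<Sum>u\<in>N v. card (N u))"
    by (rule sum_mono) (rule card_image_le[OF fin_N])
  also have "\<dots> = (\<Sum>u\<in>N v. d)"
    using card_N N_V by (intro sum.cong) auto
  also have "\<dots> = d * d"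
    using card_N[OF v] by simp
  finally show ?thesis .
qed

definition nbhd_edges_spokes_outside ::
    "'v set set \<Rightarrow> ('v set \<Rightarrow> nat) \<Rightarrow> nat set \<Rightarrow> 'v \<Rightarrow> 'v set set" where
  "nbhd_edges_spokes_outside E f L v = {e\<in>nbhd_edges E f L v. \<forall>u\<in>e. f {v, u} \<notin> L}"

(* The edge yz seen from v becomes the edge vz seen from y, for both endpoints y of yz. *)
definition rotations :: "'v \<Rightarrow> 'v set \<Rightarrow> ('v \<times> 'v set) set" where
  "rotations v e = (\<lambda>y. (y, insert v (e - {y}))) ` e"

lemma card_rotations: "simple_graph' V E \<Longrightarrow> e \<in> E \<Longrightarrow> card (rotations v e) = 2"
proof -
  assume "simple_graph' V E" "e \<in> E"
  moreover have "inj_on (\<lambda>y. (y, insert v (e - {y}))) e" by (rule inj_onI) simp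
  ultimately show ?thesis by (simp add: rotations_def card_image simple_graph'_card_edge)
qed

lemma rotations_subset:
  assumes s: "simple_graph' V E" and LH: "\<forall>e\<in>E. f e \<notin> L \<longrightarrow> f e \<in> H"
    and v: "v \<in> V" and e: "e \<in> nbhd_edges_spokes_outside E f L v"
  shows "rotations v e \<subseteq> Sigma V (nbhd_edges E f H)"
proof
  fix x assume "x \<in> rotations v e"
  then obtain y where y: "y \<in> e" "x = (y, insert v (e - {y}))" unfolding rotations_def by auto
  have "e \<in> E" using e unfolding nbhd_edges_spokes_outside_def nbhd_edges_def by blast
  then obtain z where z: "z \<noteq> y" "e = {y, z}" "y \<in> V"
    using simple_graph'_edge_at[OF s _ y(1)] by blast
  have x: "x = (y, {v, z})" using y z by auto
  have "y \<in> nbhd E v" "z \<in> nbhd E v" "{y, z} \<in> E" "f {v, z} \<notin> L"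
    using e z unfolding nbhd_edges_spokes_outside_def nbhd_edges_def by auto
  then have "{v, z} \<in> E" "v \<in> nbhd E y" "z \<in> nbhd E y" "f {v, z} \<in> H"
    using LH nbhd_symmetric by (auto simp: nbhd_def insert_commute)
  then show "x \<in> Sigma V (nbhd_edges E f H)" unfolding nbhd_edges_def x using z(3) by simp
qed

lemma rotations_disjoint:
  assumes s: "simple_graph' V E"
    and e: "e \<in> nbhd_edges_spokes_outside E f L v" and e': "e' \<in> nbhd_edges_spokes_outside E f L v'"
    and ne: "(v, e) \<noteq> (v', e')"
  shows "rotations v e \<inter> rotations v' e' = {}"
proof (rule ccontr)
  assume "rotations v e \<inter> rotations v' e' \<noteq> {}"
  then obtain y where y: "y \<in> e" "y \<in> e'" and eq: "insert v (e - {y}) = insert v' (e' - {y})"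
    unfolding rotations_def by auto
  have E: "e \<in> E" "e' \<in> E"
    using e e' unfolding nbhd_edges_spokes_outside_def nbhd_edges_def by auto
  obtain z where z: "z \<noteq> y" "e = {y, z}" using simple_graph'_edge_at[OF s E(1) y(1)] by blast
  obtain z' where z': "z' \<noteq> y" "e' = {y, z'}" using simple_graph'_edge_at[OF s E(2) y(2)] by blast
  have "{v, z} = {v', z'}" using eq z z' by (auto simp: insert_Diff_if)
  then consider "v = v'" "z = z'" | "v = z'" "z = v'" by (metis doubleton_eq_iff)
  then show False
  proof cases
    case 1
    then show False using ne z z' by simp
  next
    case 2
    have "f e' \<in> L" "f {v, y} \<notin> L"
      using e e' y unfolding nbhd_edges_spokes_outside_def nbhd_edges_def by auto
    then show False using z' 2 by (simp add: insert_commute)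
  qed
qed

lemma double_count_nbhd_edges_spokes_outside:
  fixes V :: "'v set"
  assumes s: "simple_graph' V E" and LH: "\<forall>e\<in>E. f e \<notin> L \<longrightarrow> f e \<in> H"
  shows "2 * (\<Sum>v\<in>V. card (nbhd_edges_spokes_outside E f L v)) \<le> (\<Sum>v\<in>V. card (nbhd_edges E f H v))"
proof -
  define A where "A = Sigma V (nbhd_edges_spokes_outside E f L)"
  define Q where "Q = Sigma V (nbhd_edges E f H)"
  have finV: "finite V" using s by (simp add: simple_graph'_def)
  have finE: "finite E" by (rule simple_graph'_finite_edges[OF s])
  have finQ: "finite Q" unfolding Q_def nbhd_edges_def using finV finE by simp
  have A_E: "nbhd_edges_spokes_outside E f L v \<subseteq> E" for v
    unfolding nbhd_edges_spokes_outside_def nbhd_edges_def by blast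
  define R where "R p = rotations (fst p) (snd p)" for p :: "'v \<times> 'v set"
  have R_Q: "R p \<subseteq> Q" if "p \<in> A" for p
    using rotations_subset[OF s LH] that unfolding A_def Q_def R_def by (cases p) auto
  have finA: "finite A" unfolding A_def using finV finite_subset[OF A_E finE] by simp
  have "2 * (\<Sum>v\<in>V. card (nbhd_edges_spokes_outside E f L v)) = (\<Sum>p\<in>A. 2)"
    unfolding A_def using finV finite_subset[OF A_E finE] by (simp add: card_SigmaI)
  also have "\<dots> = (\<Sum>p\<in>A. card (R p))"
    using card_rotations[OF s] A_E unfolding A_def R_def by (intro sum.cong) (auto simp: subset_iff)
  also have "\<dots> = card (\<Union>p\<in>A. R p)"
  proof (rule card_UN_disjoint[symmetric, OF finA]; intro ballI impI)
    fix p p' assume p: "p \<in> A" and p': "p' \<in> A"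
    then show "finite (R p)" using R_Q finite_subset[OF _ finQ] by blast
    assume "p \<noteq> p'"
    obtain v e v' e' where pe: "p = (v, e)" "p' = (v', e')" by fastforce
    show "R p \<inter> R p' = {}"
      unfolding R_def pe fst_conv snd_conv
      by (rule rotations_disjoint[OF s]) (use p p' pe \<open>p \<noteq> p'\<close> in \<open>auto simp: A_def\<close>)
  qed
  also have "\<dots> \<le> card Q"
    using R_Q by (intro card_mono[OF finQ]) auto
  also have "card Q = (\<Sum>v\<in>V. card (nbhd_edges E f H v))"
    unfolding Q_def nbhd_edges_def using finV finE by (simp add: card_SigmaI)
  finally show ?thesis .
qed

lemma nbhd_edges_low_le_high:
  assumes s: "simple_graph' V E" and LH: "\<forall>e\<in>E. f e \<notin> L \<longrightarrow> f e \<in> H"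
    and deg: "\<forall>w\<in>V. card {e\<in>E. w \<in> e \<and> f e \<in> L} = d"
  shows "2 * (\<Sum>v\<in>V. card (nbhd_edges E f L v))
    \<le> (\<Sum>v\<in>V. card (nbhd_edges E f H v)) + 2 * card V * d\<^sup>2"
proof -
  define A where "A = nbhd_edges_spokes_outside E f L"
  define B where "B v = {e\<in>nbhd_edges E f L v. \<exists>u\<in>e. f {v, u} \<in> L}" for v
  have fin: "finite (nbhd_edges E f L v)" for v
    using simple_graph'_finite_edges[OF s] by (simp add: nbhd_edges_def)
  have "card (nbhd_edges E f L v) = card (A v) + card (B v)" for v
  proof -
    have "nbhd_edges E f L v = A v \<union> B v" "A v \<inter> B v = {}"
      unfolding A_def B_def nbhd_edges_spokes_outside_def by auto
    moreover have "finite (A v)" "finite (B v)"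
      using fin unfolding A_def B_def nbhd_edges_spokes_outside_def by auto
    ultimately show ?thesis by (simp add: card_Un_disjoint)
  qed
  then have "2 * (\<Sum>v\<in>V. card (nbhd_edges E f L v))
      = 2 * (\<Sum>v\<in>V. card (A v)) + 2 * (\<Sum>v\<in>V. card (B v))"
    by (simp add: sum.distrib)
  also have "2 * (\<Sum>v\<in>V. card (A v)) \<le> (\<Sum>v\<in>V. card (nbhd_edges E f H v))"
    unfolding A_def by (rule double_count_nbhd_edges_spokes_outside[OF s LH])
  also have "(\<Sum>v\<in>V. card (B v)) \<le> (\<Sum>v\<in>V. d * d)"
    unfolding B_def by (rule sum_mono) (rule card_nbhd_edges_spoke_inside_le[OF s _ deg])
  finally show ?thesis by (simp add: power2_eq_square)
qed

lemma incr_pos_seq_mono: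
  assumes "incr_pos_seq k a" "1 \<le> i" "i \<le> j" "j \<le> k"
  shows "a i \<le> a j"
  using assms(3,4)
proof (induction j)
  case (Suc j)
  show ?case
  proof (cases "i = Suc j")
    case False
    then have "a i \<le> a j" using Suc by simp
    also have "a j < a (Suc j)" using assms(1,2) Suc.prems False unfolding incr_pos_seq_def by auto
    finally show ?thesis by simp
  qed simp
qed simp

lemma decreasing_chain_gap:
  fixes x :: "nat \<Rightarrow> int"
  assumes dec: "\<forall>j\<in>{1..<k}. x (Suc j) < x j" and "1 \<le> j" "j \<le> i" "i \<le> k"
  shows "x i + int (i - j) \<le> x j"
  using assms(3,4)
proof (induction i)
  case (Suc i)
  show ?case
  proof (cases "j = Suc i")
    case False
    then have ji: "j \<le> i" using Suc by simp
    then have "x i + int (i - j) \<le> x j" using Suc by simp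
    moreover have "x (Suc i) < x i" using dec Suc.prems ji assms(2) by auto
    ultimately show ?thesis using ji by (simp add: Suc_diff_le)
  qed simp
qed simp

lemma chain_sum_bound:
  fixes C A :: "nat \<Rightarrow> int"
  assumes dec: "\<forall>j\<in>{1..<k}. C (Suc j) + A (Suc j) < C j + A j"
    and mono: "\<And>i j. 1 \<le> i \<Longrightarrow> i \<le> j \<Longrightarrow> j \<le> k \<Longrightarrow> A i \<le> A j"
    and C_nonneg: "\<And>i. 0 \<le> C i" and A_nonneg: "\<And>i. 0 \<le> A i"
    and q: "1 \<le> q" "q < k" "k \<le> 3 * q"
  shows "(\<Sum>i=q+1..k. C i) \<le> 2 * (\<Sum>j=1..q. C j) + 2 * A q - A k"
proof -
  define X where "X = C (q + 1)"
  define B where "B = A (q + 1) - A q"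
  have gap: "C i + A i + int (i - j) \<le> C j + A j" if "1 \<le> j" "j \<le> i" "i \<le> k" for i j
    using decreasing_chain_gap[of k "\<lambda>i. C i + A i"] dec that by auto
  have low: "X + B \<le> C j" if "j \<in> {1..q}" for j
    using gap[of j "q + 1"] mono[of j q] that q unfolding X_def B_def by auto
  have high: "C i \<le> X" if "i \<in> {q+1..k}" for i
    using gap[of "q + 1" i] mono[of "q + 1" i] that q unfolding X_def by auto
  have top: "C k \<le> X + A (q + 1) - A k"
    using gap[of "q + 1" k] q unfolding X_def by auto
  have "(\<Sum>i=q+1..k. C i) = C k + (\<Sum>i\<in>{q+1..k} - {k}. C i)"
    using q by (simp add: sum.remove)
  also have "(\<Sum>i\<in>{q+1..k} - {k}. C i) \<le> (\<Sum>i\<in>{q+1..k} - {k}. X)"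
    using high by (intro sum_mono) auto
  also have "\<dots> = int (k - q - 1) * X"
    using q by (simp add: card_Diff_singleton)
  finally have high_sum: "(\<Sum>i=q+1..k. C i) \<le> int (k - q) * X + B + A q - A k"
    using top q by (simp add: B_def of_nat_diff algebra_simps)
  have "int q * (X + B) \<le> (\<Sum>j=1..q. C j)"
    using sum_mono[of "{1..q}" "\<lambda>_. X + B" C] low by simp
  moreover have "int (k - q) * X \<le> 2 * int q * X"
    using q C_nonneg[of "q + 1"] unfolding X_def by (intro mult_right_mono) auto
  moreover have "0 \<le> B" "B \<le> int q * B"
    using q mono[of q "q + 1"] unfolding B_def by (simp_all add: mult_le_cancel_right1)
  ultimately show ?thesis
    using high_sum A_nonneg[of q] by (simp add: algebra_simps)
qed

lemma nbhd_edges_high_le_low: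
  assumes s: "simple_graph' V E" and inc: "incr_pos_seq k a"
    and deg: "\<forall>j\<in>{1..k}. col_deg' E f j v = a j"
    and flip: "\<forall>j\<in>{1..<k}. col_nbhd_edges' E f (Suc j) v < col_nbhd_edges' E f j v"
    and q: "1 \<le> q" "q < k" "k \<le> 3 * q"
  shows "int (card (nbhd_edges E f {q+1..k} v))
    \<le> 2 * int (card (nbhd_edges E f {1..q} v)) + (2 * int (a q) - int (a k))"
proof -
  define C where "C i = int (card (nbhd_edges E f {i} v))" for i
  have sum_C: "(\<Sum>i\<in>J. C i) = int (card (nbhd_edges E f J v))" if "finite J" for J
    using sum_card_fibres[of "{e\<in>E. e \<subseteq> nbhd E v}" J f] simple_graph'_finite_edges[OF s] that
    unfolding C_def nbhd_edges_def by (simp flip: of_nat_sum)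
  have "(\<Sum>i=q+1..k. C i) \<le> 2 * (\<Sum>j=1..q. C j) + 2 * int (a q) - int (a k)"
  proof (rule chain_sum_bound[OF _ _ _ _ q])
    show "\<forall>j\<in>{1..<k}. C (Suc j) + int (a (Suc j)) < C j + int (a j)"
      using flip deg col_nbhd_edges'_split[OF s] unfolding C_def by fastforce
  qed (use incr_pos_seq_mono[OF inc] C_def in auto)
  then show ?thesis by (simp add: sum_C)
qed

lemma flip_graph_top_bound:
  assumes fg: "flip_graph k a V E" and q: "1 \<le> q" "q < k" "k \<le> 3 * q"
  shows "a k \<le> 2 * a q + 2 * (\<Sum>j=1..q. a j)\<^sup>2"
proof -
  obtain f where col: "\<forall>e\<in>E. f e \<in> {1..k}"
    and deg: "\<forall>v\<in>V. \<forall>j\<in>{1..k}. col_deg' E f j v = a j"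
    and flip: "\<forall>v\<in>V. \<forall>j\<in>{1..<k}. col_nbhd_edges' E f (Suc j) v < col_nbhd_edges' E f j v"
    using fg unfolding flip_graph_def graph_notions_nat[symmetric] by blast
  have s: "simple_graph' V E" and V: "V \<noteq> {}" and inc: "incr_pos_seq k a"
    using fg unfolding flip_graph_def graph_notions_nat[symmetric] by auto
  define S where "S = (\<Sum>j=1..q. a j)"
  have finE: "finite E" by (rule simple_graph'_finite_edges[OF s])
  have finV: "finite V" using s by (simp add: simple_graph'_def)
  have per_vertex: "int (card (nbhd_edges E f {q+1..k} v))
      \<le> 2 * int (card (nbhd_edges E f {1..q} v)) + (2 * int (a q) - int (a k))" if "v \<in> V" for v
    using nbhd_edges_high_le_low[OF s inc _ _ q] deg flip that by blast
  have low_deg: "\<forall>w\<in>V. card {e\<in>E. w \<in> e \<and> f e \<in> {1..q}} = (\<Sum>j=1..q. a j)"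
  proof
    fix w assume w: "w \<in> V"
    have "card {e\<in>E. w \<in> e \<and> f e \<in> {1..q}} = (\<Sum>j=1..q. col_deg' E f j w)"
      using sum_card_fibres[of "{e\<in>E. w \<in> e}" "{1..q}" f] finE
      unfolding col_deg'_def by simp
    then show "card {e\<in>E. w \<in> e \<and> f e \<in> {1..q}} = (\<Sum>j=1..q. a j)"
      using deg w q by simp
  qed
  have col_split: "\<forall>e\<in>E. f e \<notin> {1..q} \<longrightarrow> f e \<in> {q+1..k}" using col by auto
  define lo where "lo v = int (card (nbhd_edges E f {1..q} v))" for v
  define hi where "hi v = int (card (nbhd_edges E f {q+1..k} v))" for v
  have "2 * (\<Sum>v\<in>V. card (nbhd_edges E f {1..q} v))
      \<le> (\<Sum>v\<in>V. card (nbhd_edges E f {q+1..k} v)) + 2 * card V * S\<^sup>2"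
    unfolding S_def by (rule nbhd_edges_low_le_high[OF s col_split low_deg])
  then have "2 * (\<Sum>v\<in>V. lo v) \<le> (\<Sum>v\<in>V. hi v) + 2 * int (card V) * (int S)\<^sup>2"
    unfolding lo_def hi_def
    by (metis (mono_tags) of_nat_le_iff of_nat_add of_nat_mult of_nat_power of_nat_numeral of_nat_sum)
  moreover have "(\<Sum>v\<in>V. hi v) \<le> 2 * (\<Sum>v\<in>V. lo v) + int (card V) * (2 * int (a q) - int (a k))"
  proof -
    have "(\<Sum>v\<in>V. hi v) \<le> (\<Sum>v\<in>V. 2 * lo v + (2 * int (a q) - int (a k)))"
      using per_vertex unfolding lo_def hi_def by (intro sum_mono) auto
    also have "\<dots> = 2 * (\<Sum>v\<in>V. lo v) + int (card V) * (2 * int (a q) - int (a k))"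
      by (simp add: sum.distrib sum_distrib_left)
    finally show ?thesis .
  qed
  ultimately have "int (card V) * (int (a k) - 2 * int (a q)) \<le> int (card V) * (2 * (int S)\<^sup>2)"
    by (simp add: algebra_simps)
  moreover have "0 < int (card V)" using finV V by (simp add: card_gt_0_iff)
  ultimately have "int (a k) - 2 * int (a q) \<le> 2 * (int S)\<^sup>2" by simp
  then have "int (a k) \<le> int (2 * a q + 2 * S\<^sup>2)" by simp
  then show ?thesis unfolding S_def by (simp only: of_nat_le_iff)
qed

lemma admissible_imp_three_mul_less:
  assumes "admissible k q"
  shows "3 * q < k"
proof (rule ccontr)
  assume "\<not> 3 * q < k"
  have q: "1 \<le> q" "q < k" using assms unfolding admissible_def by auto
  obtain h where h: "\<forall>N. \<exists>a. flip_seq k a \<and> a q = h \<and> a k > N"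
    using assms unfolding admissible_def by blast
  obtain a where a: "flip_seq k a" "a q = h" "a k > 2 * h + 2 * (q * h)\<^sup>2" using h by blast
  obtain V E where fg: "flip_graph k a V E" using a(1) unfolding flip_seq_def by blast
  have "incr_pos_seq k a" using fg unfolding flip_graph_def by blast
  then have "(\<Sum>j=1..q. a j) \<le> (\<Sum>j=1..q. h)"
    using incr_pos_seq_mono[of k a] a(2) q by (intro sum_mono) auto
  then have "(\<Sum>j=1..q. a j)\<^sup>2 \<le> (q * h)\<^sup>2" by (simp add: power_mono)
  moreover have "a k \<le> 2 * a q + 2 * (\<Sum>j=1..q. a j)\<^sup>2"
    using flip_graph_top_bound[OF fg q] \<open>\<not> 3 * q < k\<close> by simp
  ultimately show False using a(2,3) by linarith
qed

section \<open>Cayley graphs of the symmetric-difference group\<close>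

(* A constant for the library abbreviation sym_diff, so that the simplifier keeps it folded. *)
definition symdiff :: "'a set \<Rightarrow> 'a set \<Rightarrow> 'a set" where
  "symdiff A B = sym_diff A B"

lemma symdiff_cancel_left [simp]: "symdiff A (symdiff A B) = B"
  unfolding symdiff_def by auto

lemma symdiff_self [simp]: "symdiff A A = {}"
  unfolding symdiff_def by auto

lemma symdiff_commute: "symdiff A B = symdiff B A"
  unfolding symdiff_def by auto

lemma symdiff_symdiff_same: "symdiff (symdiff C A) (symdiff C B) = symdiff A B"
  unfolding symdiff_def by auto

lemma symdiff_subset: "A \<subseteq> X \<Longrightarrow> B \<subseteq> X \<Longrightarrow> symdiff A B \<subseteq> X"
  unfolding symdiff_def by auto

lemma Union_minus_Inter_doubleton: "\<Union>{A, B} - \<Inter>{A, B} = symdiff A B"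
  unfolding symdiff_def by auto

lemma inj_symdiff: "inj (symdiff A)"
  by (rule injI) (metis symdiff_cancel_left)

lemma symdiff_singletons: "symdiff {x} {y} = (if x = y then {} else {x, y})"
  unfolding symdiff_def by auto

lemma symdiff_eq_singleton:
  assumes "symdiff I1 I2 = {u}"
  shows "(u \<notin> I1 \<and> I2 = insert u I1) \<or> (u \<notin> I2 \<and> I1 = insert u I2)"
proof -
  have "u \<in> I1 - I2 \<or> u \<in> I2 - I1" using assms unfolding symdiff_def by blast
  moreover have same: "x \<in> I1 \<longleftrightarrow> x \<in> I2" if "x \<noteq> u" for x
    using assms that unfolding symdiff_def by blast
  ultimately show ?thesis
  proof (elim disjE)
    assume u: "u \<in> I1 - I2"
    have "I1 = insert u I2"
    proof (rule set_eqI)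
      fix x show "x \<in> I1 \<longleftrightarrow> x \<in> insert u I2" by (cases "x = u") (use u same in auto)
    qed
    then show ?thesis using u by blast
  next
    assume u: "u \<in> I2 - I1"
    have "I2 = insert u I1"
    proof (rule set_eqI)
      fix x show "x \<in> I2 \<longleftrightarrow> x \<in> insert u I1" by (cases "x = u") (use u same in auto)
    qed
    then show ?thesis using u by blast
  qed
qed

definition sum_pairs :: "'i set set \<Rightarrow> ('i set \<Rightarrow> nat) \<Rightarrow> nat \<Rightarrow> 'i set set set" where
  "sum_pairs D col j =
     {{d1, d2} | d1 d2. d1 \<in> D \<and> d2 \<in> D \<and> symdiff d1 d2 \<in> D \<and> col (symdiff d1 d2) = j}"

lemma sum_pairs_iff:
  "x \<in> sum_pairs D col j \<longleftrightarrow>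
     (\<exists>d1 d2. x = {d1, d2} \<and> d1 \<in> D \<and> d2 \<in> D \<and> symdiff d1 d2 \<in> D \<and> col (symdiff d1 d2) = j)"
  unfolding sum_pairs_def by blast

locale cayley_graph =
  fixes X :: "'i set" and D :: "'i set set" and col :: "'i set \<Rightarrow> nat"
  assumes finite_X: "finite X" and D_Pow: "D \<subseteq> Pow X" and empty_notin_D: "{} \<notin> D"
begin

definition edges :: "'i set set set" where
  "edges = {{A, symdiff A d} | A d. A \<subseteq> X \<and> d \<in> D}"

definition colour :: "'i set set \<Rightarrow> nat" where
  "colour e = col (\<Union>e - \<Inter>e)"

lemma colour_doubleton: "colour {A, B} = col (symdiff A B)"
  unfolding colour_def Union_minus_Inter_doubleton ..

lemma symdiff_generator_neq: "d \<in> D \<Longrightarrow> symdiff A d \<noteq> A"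
  by (metis empty_notin_D symdiff_cancel_left symdiff_self)

lemma doubleton_in_edges_iff: "{A, B} \<in> edges \<longleftrightarrow> A \<subseteq> X \<and> B \<subseteq> X \<and> symdiff A B \<in> D"
proof
  assume "{A, B} \<in> edges"
  then obtain A' d where h: "{A, B} = {A', symdiff A' d}" "A' \<subseteq> X" "d \<in> D"
    unfolding edges_def by auto
  have "d \<subseteq> X" using h D_Pow by auto
  from h(1) have "(A = A' \<and> B = symdiff A' d) \<or> (A = symdiff A' d \<and> B = A')"
    by (metis doubleton_eq_iff)
  then show "A \<subseteq> X \<and> B \<subseteq> X \<and> symdiff A B \<in> D"
    using h \<open>d \<subseteq> X\<close> symdiff_subset[of A' X d] by (auto simp: symdiff_commute)
next
  assume h: "A \<subseteq> X \<and> B \<subseteq> X \<and> symdiff A B \<in> D"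
  have "{A, B} = {A, symdiff A (symdiff A B)}" by simp
  then show "{A, B} \<in> edges" unfolding edges_def using h by blast
qed

lemma edgesE:
  assumes "e \<in> edges"
  obtains A B where "e = {A, B}" "A \<noteq> B"
proof -
  obtain A d where "e = {A, symdiff A d}" "d \<in> D" using assms unfolding edges_def by blast
  moreover have "A \<noteq> symdiff A d" using symdiff_generator_neq[OF \<open>d \<in> D\<close>] by metis
  ultimately show ?thesis using that by blast
qed

lemma simple_graph'_edges: "simple_graph' (Pow X) edges"
  unfolding simple_graph'_def
proof (intro conjI ballI)
  show "finite (Pow X)" using finite_X by simp
  fix e assume e: "e \<in> edges"
  then obtain A B where AB: "e = {A, B}" "A \<noteq> B" by (rule edgesE)
  moreover have "A \<subseteq> X" "B \<subseteq> X" using e AB doubleton_in_edges_iff by simp_all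
  ultimately show "\<exists>u v. u \<noteq> v \<and> u \<in> Pow X \<and> v \<in> Pow X \<and> e = {u, v}"
    by blast
qed

lemma edges_at:
  assumes v: "v \<subseteq> X"
  shows "{e\<in>edges. v \<in> e \<and> P e} = (\<lambda>d. {v, symdiff v d}) ` {d\<in>D. P {v, symdiff v d}}"
proof (rule set_eqI, rule iffI)
  fix e assume e: "e \<in> {e\<in>edges. v \<in> e \<and> P e}"
  then have "e \<in> edges" by simp
  then obtain A B where AB: "e = {A, B}" "A \<noteq> B" by (rule edgesE)
  have "v \<in> e" "P e" using e by simp_all
  then have "v = A \<or> v = B" using AB by simp
  then obtain w where w: "e = {v, w}" using AB by (metis insert_commute)
  have "{v, w} \<in> edges" using \<open>e \<in> edges\<close> w by simp
  then have sD: "symdiff v w \<in> D" using doubleton_in_edges_iff by blast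
  have "e = {v, symdiff v (symdiff v w)}" using w by simp
  moreover have "P {v, symdiff v (symdiff v w)}" using \<open>P e\<close> w by simp
  ultimately show "e \<in> (\<lambda>d. {v, symdiff v d}) ` {d\<in>D. P {v, symdiff v d}}" using sD by blast
next
  fix e assume "e \<in> (\<lambda>d. {v, symdiff v d}) ` {d\<in>D. P {v, symdiff v d}}"
  then obtain d where d: "d \<in> D" "P {v, symdiff v d}" "e = {v, symdiff v d}" by auto
  have "symdiff v d \<subseteq> X" using d D_Pow v symdiff_subset by blast
  then have "{v, symdiff v d} \<in> edges" using doubleton_in_edges_iff d v by simp
  then show "e \<in> {e\<in>edges. v \<in> e \<and> P e}" using d by auto
qed

lemma inj_on_edge_at: "inj_on (\<lambda>d. {v, symdiff v d}) D"
proof (rule inj_onI)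
  fix d d' assume d: "d \<in> D" "d' \<in> D" and eq: "{v, symdiff v d} = {v, symdiff v d'}"
  have "symdiff v d \<noteq> v" "symdiff v d' \<noteq> v" using symdiff_generator_neq d by auto
  then have "symdiff v d = symdiff v d'" using eq by (metis doubleton_eq_iff)
  then have "symdiff v (symdiff v d) = symdiff v (symdiff v d')" by simp
  then show "d = d'" by (simp only: symdiff_cancel_left)
qed

lemma card_edges_at:
  assumes "v \<subseteq> X"
  shows "card {e\<in>edges. v \<in> e \<and> P e} = card {d\<in>D. P {v, symdiff v d}}"
proof -
  have "card {e\<in>edges. v \<in> e \<and> P e} = card ((\<lambda>d. {v, symdiff v d}) ` {d\<in>D. P {v, symdiff v d}})"
    using edges_at[OF assms] by simp
  also have "\<dots> = card {d\<in>D. P {v, symdiff v d}}"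
    by (rule card_image) (rule inj_on_subset[OF inj_on_edge_at], auto)
  finally show ?thesis .
qed

lemma nbhd_edges:
  assumes v: "v \<subseteq> X"
  shows "nbhd edges v = symdiff v ` D"
proof (rule set_eqI, rule iffI)
  fix u assume "u \<in> nbhd edges v"
  then have "symdiff u v \<in> D" using doubleton_in_edges_iff by (auto simp: nbhd_def)
  then have "symdiff v u \<in> D" by (simp add: symdiff_commute)
  moreover have "u = symdiff v (symdiff v u)" by simp
  ultimately show "u \<in> symdiff v ` D" by blast
next
  fix u assume "u \<in> symdiff v ` D"
  then obtain d where d: "d \<in> D" "u = symdiff v d" by auto
  have "u \<subseteq> X" using d D_Pow v symdiff_subset by blast
  moreover have "symdiff u v \<in> D"
  proof -
    have "symdiff u v = symdiff v u" by (rule symdiff_commute)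
    also have "\<dots> = d" using d(2) by simp
    finally show ?thesis using d(1) by simp
  qed
  ultimately show "u \<in> nbhd edges v" using doubleton_in_edges_iff v by (auto simp: nbhd_def)
qed

lemma nbhd_edges_colour:
  assumes v: "v \<subseteq> X"
  shows "nbhd_edges edges colour {j} v = image (symdiff v) ` sum_pairs D col j"
proof (rule set_eqI, rule iffI)
  fix e assume e: "e \<in> nbhd_edges edges colour {j} v"
  then have "e \<in> edges" by (simp add: nbhd_edges_def)
  then obtain A B where AB: "e = {A, B}" "A \<noteq> B" by (rule edgesE)
  have "A \<in> symdiff v ` D" "B \<in> symdiff v ` D"
    using e AB nbhd_edges[OF v] by (auto simp: nbhd_edges_def)
  then obtain d1 d2 where d: "d1 \<in> D" "d2 \<in> D" "A = symdiff v d1" "B = symdiff v d2" by auto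
  have "symdiff A B \<in> D" using e AB doubleton_in_edges_iff by (auto simp: nbhd_edges_def)
  have sAB: "symdiff A B = symdiff d1 d2" using d by (simp add: symdiff_symdiff_same)
  then have s12: "symdiff d1 d2 \<in> D" using \<open>symdiff A B \<in> D\<close> by simp
  have "colour e = j" using e by (simp add: nbhd_edges_def)
  then have "col (symdiff d1 d2) = j" using AB colour_doubleton sAB by simp
  then have "{d1, d2} \<in> sum_pairs D col j" unfolding sum_pairs_def using d s12 by blast
  moreover have "e = symdiff v ` {d1, d2}" using AB d by auto
  ultimately show "e \<in> image (symdiff v) ` sum_pairs D col j" by blast
next
  fix e assume "e \<in> image (symdiff v) ` sum_pairs D col j"
  then obtain d1 d2 where d: "d1 \<in> D" "d2 \<in> D" "symdiff d1 d2 \<in> D" "col (symdiff d1 d2) = j"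
    "e = {symdiff v d1, symdiff v d2}" unfolding sum_pairs_def by auto
  have X1: "symdiff v d1 \<subseteq> X" "symdiff v d2 \<subseteq> X" using d D_Pow v symdiff_subset by blast+
  have "{symdiff v d1, symdiff v d2} \<in> edges"
    unfolding doubleton_in_edges_iff symdiff_symdiff_same using X1 d by simp
  then have "e \<in> edges" using d by simp
  moreover have "e \<subseteq> nbhd edges v" using d nbhd_edges[OF v] by auto
  moreover have "colour e = j" using d by (simp add: colour_doubleton symdiff_symdiff_same)
  ultimately show "e \<in> nbhd_edges edges colour {j} v" by (simp add: nbhd_edges_def)
qed

lemma col_deg'_edges: "v \<subseteq> X \<Longrightarrow> col_deg' edges colour j v = card {d\<in>D. col d = j}"
  unfolding col_deg'_def by (simp add: card_edges_at colour_doubleton)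

lemma col_nbhd_edges'_edges:
  assumes v: "v \<subseteq> X"
  shows "col_nbhd_edges' edges colour j v = card {d\<in>D. col d = j} + card (sum_pairs D col j)"
proof -
  have "inj_on (image (symdiff v)) (sum_pairs D col j)"
    using inj_on_image_Pow[OF inj_symdiff[of v]] by (auto intro: inj_on_subset)
  then have "card (image (symdiff v) ` sum_pairs D col j) = card (sum_pairs D col j)"
    by (rule card_image)
  then show ?thesis
    using col_nbhd_edges'_split[OF simple_graph'_edges, of colour j v] col_deg'_edges[OF v]
      nbhd_edges_colour[OF v] by simp
qed

lemma flip_seq:
  assumes inc: "incr_pos_seq k a" and col: "\<forall>d\<in>D. col d \<in> {1..k}"
    and count: "\<forall>j\<in>{1..k}. card {d\<in>D. col d = j} = a j"
    and flip: "\<forall>j\<in>{1..<k}. a (Suc j) + card (sum_pairs D col (Suc j)) < a j + card (sum_pairs D col j)"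
  shows "flip_seq k a"
proof (rule flip_graph'_imp_flip_seq)
  have finD: "finite D" using D_Pow finite_X by (meson finite_Pow_iff finite_subset)
  have "(\<Sum>j=1..k. card {d\<in>D. col d = j}) = card {d\<in>D. col d \<in> {1..k}}"
    by (rule sum_card_fibres[OF finD]) simp
  also have "{d\<in>D. col d \<in> {1..k}} = D" using col by auto
  finally have card_D: "card D = (\<Sum>j=1..k. a j)" using count by simp
  have deg: "card {e\<in>edges. v \<in> e} = (\<Sum>j=1..k. a j)" if "v \<in> Pow X" for v
    using card_edges_at[of v "\<lambda>_. True"] that card_D by simp
  have colour: "colour e \<in> {1..k}" if e: "e \<in> edges" for e
  proof -
    obtain A B where "e = {A, B}" by (rule edgesE[OF e])
    then show ?thesis using e doubleton_in_edges_iff col colour_doubleton by auto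
  qed
  show "flip_graph' k a (Pow X) edges"
    unfolding flip_graph'_def
  proof (intro conjI exI[of _ colour] ballI)
    show "incr_pos_seq k a" by (rule inc)
    show "simple_graph' (Pow X) edges" by (rule simple_graph'_edges)
    show "Pow X \<noteq> {}" by blast
  qed (use deg colour count flip in \<open>simp_all add: col_deg'_edges col_nbhd_edges'_edges\<close>)
qed

end

section \<open>A construction for the lower bound\<close>

type_synonym atom = "nat \<times> nat \<times> nat \<times> nat"

definition hub :: atom where
  "hub = (0, 0, 0, 0)"

definition low_atom :: "nat \<Rightarrow> nat \<Rightarrow> atom" where
  "low_atom j t = (1, j, t, 0)"

definition tag :: "nat \<times> nat \<times> nat \<Rightarrow> atom" where
  "tag b = (2, fst b, fst (snd b), snd (snd b))"

definition block :: "nat \<times> nat \<times> nat \<Rightarrow> atom set \<Rightarrow> atom set" where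
  "block b I = insert hub (insert (tag b) I)"

definition triple :: "nat \<Rightarrow> atom set" where
  "triple j = (if j = 0 then {} else low_atom j ` {..<3})"

definition low_atoms :: "atom set" where
  "low_atoms = {x. fst x = 1}"

definition gen_col :: "atom set \<Rightarrow> nat" where
  "gen_col d = (if hub \<in> d then (THE c. \<exists>j l. (2, j, c, l) \<in> d) else (THE j. \<exists>t. (1, j, t, 0) \<in> d))"

lemma low_atom_inj [simp]: "low_atom j t = low_atom j' t' \<longleftrightarrow> j = j' \<and> t = t'"
  by (simp add: low_atom_def)

lemma tag_inj [simp]: "tag b = tag b' \<longleftrightarrow> b = b'"
  by (auto simp: tag_def prod_eq_iff)

lemma hub_neq_low_atom [simp]: "hub \<noteq> low_atom j t" "low_atom j t \<noteq> hub"
  by (simp_all add: hub_def low_atom_def)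

lemma hub_neq_tag [simp]: "hub \<noteq> tag b" "tag b \<noteq> hub"
  by (simp_all add: hub_def tag_def)

lemma low_atom_neq_tag [simp]: "low_atom j t \<noteq> tag b" "tag b \<noteq> low_atom j t"
  by (simp_all add: low_atom_def tag_def)

lemma hub_notin_low_atoms [simp]: "hub \<notin> low_atoms"
  by (simp add: hub_def low_atoms_def)

lemma tag_notin_low_atoms [simp]: "tag b \<notin> low_atoms"
  by (simp add: tag_def low_atoms_def)

lemma low_atom_in_low_atoms [simp]: "low_atom j t \<in> low_atoms"
  by (simp add: low_atom_def low_atoms_def)

lemma hub_in_block [simp]: "hub \<in> block b I"
  by (simp add: block_def)

lemma triple_0 [simp]: "triple 0 = {}"
  by (simp add: triple_def)

lemma finite_triple [simp]: "finite (triple j)"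
  by (simp add: triple_def)

lemma triple_subset_low_atoms: "triple j \<subseteq> low_atoms"
  by (auto simp: triple_def)

lemma card_triple: "j \<noteq> 0 \<Longrightarrow> card (triple j) = 3"
  by (simp add: triple_def card_image inj_on_def)

lemma low_atom_in_triple_iff: "low_atom j t \<in> triple i \<longleftrightarrow> i \<noteq> 0 \<and> j = i \<and> t < 3"
  by (auto simp: triple_def)

lemma gen_col_singleton: "gen_col {low_atom j t} = j"
  by (simp add: gen_col_def low_atom_def hub_def)

lemma gen_col_block: "I \<subseteq> low_atoms \<Longrightarrow> gen_col (block b I) = fst (snd b)"
proof -
  assume I: "I \<subseteq> low_atoms"
  have "(\<exists>j l. (2,j,c,l) \<in> block b I) \<longleftrightarrow> c = fst (snd b)" for c
  proof
    assume "\<exists>j l. (2,j,c,l) \<in> block b I"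
    then obtain j l where h: "(2,j,c,l) \<in> block b I" by blast
    have "(2,j,c,l) \<notin> I" using I unfolding low_atoms_def by auto
    moreover have "(2,j,c,l) \<noteq> hub" by (simp add: hub_def)
    ultimately have "(2,j,c,l) = tag b" using h by (simp add: block_def)
    then show "c = fst (snd b)" by (cases b) (simp add: tag_def)
  next
    assume "c = fst (snd b)"
    then show "\<exists>j l. (2,j,c,l) \<in> block b I" by (cases b) (auto simp: block_def tag_def)
  qed
  then show ?thesis by (simp add: gen_col_def block_def)
qed

lemma block_inj:
  assumes "I \<subseteq> low_atoms" "I' \<subseteq> low_atoms" "block b I = block b' I'"
  shows "b = b' \<and> I = I'"
proof -
  have "tag b \<in> block b I" unfolding block_def by simp
  hence "tag b \<in> block b' I'" unfolding assms(3) .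
  moreover have "tag b \<notin> I'" using assms(2) tag_notin_low_atoms by blast
  ultimately have "tag b = hub \<or> tag b = tag b' \<or> tag b \<in> I'" unfolding block_def by (simp only: insert_iff)
  then have bb: "b = b'" using \<open>tag b \<notin> I'\<close> by simp
  have "I = block b I - {hub, tag b}" using assms(1) hub_notin_low_atoms tag_notin_low_atoms by (auto simp: block_def)
  also have "\<dots> = block b' I' - {hub, tag b'}" using assms(3) bb by simp
  also have "\<dots> = I'" using assms(2) hub_notin_low_atoms tag_notin_low_atoms by (auto simp: block_def)
  finally show ?thesis using bb by simp
qed

lemma symdiff_block_same:
  "I \<subseteq> low_atoms \<Longrightarrow> I' \<subseteq> low_atoms \<Longrightarrow> symdiff (block b I) (block b I') = symdiff I I'"
  unfolding symdiff_def block_def using hub_notin_low_atoms tag_notin_low_atoms by blast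

lemma tag_in_symdiff_block:
  "I \<subseteq> low_atoms \<Longrightarrow> I' \<subseteq> low_atoms \<Longrightarrow> b \<noteq> b' \<Longrightarrow> tag b \<in> symdiff (block b I) (block b' I')"
  unfolding symdiff_def block_def using tag_notin_low_atoms by auto

lemma symdiff_singleton_block:
  "u \<in> low_atoms \<Longrightarrow> I \<subseteq> low_atoms \<Longrightarrow> symdiff {u} (block b I) = block b (symdiff {u} I)"
  unfolding symdiff_def block_def using hub_notin_low_atoms tag_notin_low_atoms by blast

(* The generators: for each low colour j \<le> q the j + 3 singletons {low_atom j t}, and for each
   block b = (j, c, l) of colour c > q the sets block b I with I \<subseteq> triple j, where triple 0 = {}
   and triple j consists of three low atoms of colour j.  Two generators sum to a generator of low
   colour i exactly for the pairs {block b I, block b (insert u I)} with u \<in> triple i, and to one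
   of high colour c exactly for the pairs {{u}, block b I} with u \<in> triple (fst b).  The offsets
   q - j and k - c in n_blocks and the slope 8q + 1 of n_plain make e_j strictly decreasing, and the
   free parameter P makes a_k large. *)
locale lower_construction =
  fixes q k P :: nat
  assumes q_pos: "1 \<le> q" and eleven_q_less: "11 * q < 3 * k"
    and P_large: "32 * q * (q + k) + 8 * q < P"
begin

lemma q_less_k: "q < k"
  using q_pos eleven_q_less by linarith

definition n_blocks :: "nat \<Rightarrow> nat \<Rightarrow> nat" where
  "n_blocks j c = P + (q - j) + (k - c)"

definition n_plain :: "nat \<Rightarrow> nat" where
  "n_plain c = (8 * q + 1) * (c - q)"

definition blocks :: "(nat \<times> nat \<times> nat) set" where
  "blocks = {(j, c, l). q < c \<and> c \<le> k \<and>
     ((1 \<le> j \<and> j \<le> q \<and> l < n_blocks j c) \<or> (j = 0 \<and> l < n_plain c))}"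

definition blocks_col :: "nat \<Rightarrow> (nat \<times> nat \<times> nat) set" where
  "blocks_col c = {b\<in>blocks. fst (snd b) = c}"

definition blocks_type :: "nat \<Rightarrow> (nat \<times> nat \<times> nat) set" where
  "blocks_type i = {b\<in>blocks. fst b = i}"

definition n_col :: "nat \<Rightarrow> nat" where
  "n_col c = (\<Sum>j=1..q. n_blocks j c)"

definition n_type :: "nat \<Rightarrow> nat" where
  "n_type j = (\<Sum>c=q+1..k. n_blocks j c)"

definition atom_gens :: "atom set set" where
  "atom_gens = (\<lambda>(j, t). {low_atom j t}) ` (SIGMA j:{1..q}. {..<j + 3})"

definition block_gens :: "atom set set" where
  "block_gens = (\<lambda>(b, I). block b I) ` (SIGMA b:blocks. Pow (triple (fst b)))"

definition gens :: "atom set set" where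
  "gens = atom_gens \<union> block_gens"

definition gen_count :: "nat \<Rightarrow> nat" where
  "gen_count i = card {d\<in>gens. gen_col d = i}"

lemma atom_gens_iff: "d \<in> atom_gens \<longleftrightarrow> (\<exists>j t. 1 \<le> j \<and> j \<le> q \<and> t < j + 3 \<and> d = {low_atom j t})"
  unfolding atom_gens_def by force

lemma block_gens_iff: "d \<in> block_gens \<longleftrightarrow> (\<exists>b I. b \<in> blocks \<and> I \<subseteq> triple (fst b) \<and> d = block b I)"
  unfolding block_gens_def by force

lemma atom_gens_singleton:
  assumes "d \<in> atom_gens"
  shows "\<exists>u. d = {u} \<and> u \<in> low_atoms"
proof -
  obtain j t where "d = {low_atom j t}" using assms unfolding atom_gens_iff by blast
  then show ?thesis using low_atom_in_low_atoms by blast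
qed

lemma block_gens_block: "d \<in> block_gens \<Longrightarrow> \<exists>b I. d = block b I \<and> b \<in> blocks \<and> I \<subseteq> triple (fst b)"
  unfolding block_gens_iff by auto

lemma hub_notin_atom_gen: "d \<in> atom_gens \<Longrightarrow> hub \<notin> d"
  using atom_gens_singleton hub_notin_low_atoms by fastforce

lemma hub_in_block_gen: "d \<in> block_gens \<Longrightarrow> hub \<in> d"
  using block_gens_block by fastforce

lemma blocks_low_type: "b \<in> blocks \<Longrightarrow> fst b \<noteq> 0 \<Longrightarrow> 1 \<le> fst b \<and> fst b \<le> q"
  unfolding blocks_def by auto

lemma finite_blocks: "finite blocks"
proof -
  have "blocks \<subseteq> {..q} \<times> {..k} \<times> {..<P + q + k + (8 * q + 1) * k}"
  proof
    fix b assume "b \<in> blocks"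
    then obtain j c l where b: "b = (j, c, l)" "q < c" "c \<le> k"
      "(1 \<le> j \<and> j \<le> q \<and> l < n_blocks j c) \<or> (j = 0 \<and> l < n_plain c)"
      unfolding blocks_def by auto
    have "n_blocks j c \<le> P + q + k" unfolding n_blocks_def by simp
    moreover have "n_plain c \<le> (8 * q + 1) * k" unfolding n_plain_def using b by (intro mult_le_mono2) simp
    ultimately show "b \<in> {..q} \<times> {..k} \<times> {..<P + q + k + (8 * q + 1) * k}" using b by auto
  qed
  then show ?thesis by (rule finite_subset) simp
qed

lemma finite_blocks_col: "finite (blocks_col c)"
  unfolding blocks_col_def using finite_blocks by simp

lemma finite_blocks_type: "finite (blocks_type i)"
  unfolding blocks_type_def using finite_blocks by simp

lemma finite_gens: "finite gens"
  unfolding gens_def atom_gens_def block_gens_def using finite_blocks by simp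

lemma finite_Union_gens: "finite (\<Union>gens)"
proof (rule finite_Union[OF finite_gens])
  fix d assume "d \<in> gens"
  then have "d \<in> atom_gens \<or> d \<in> block_gens" unfolding gens_def by simp
  then show "finite d"
  proof
    assume "d \<in> atom_gens" then show ?thesis using atom_gens_singleton by auto
  next
    assume "d \<in> block_gens"
    then obtain b I where d: "d = block b I" "I \<subseteq> triple (fst b)" using block_gens_block by blast
    then have "finite I" using finite_subset finite_triple by blast
    then show ?thesis using d by (simp add: block_def)
  qed
qed

lemma empty_notin_gens: "{} \<notin> gens"
  unfolding gens_def by (auto simp: atom_gens_iff block_gens_iff block_def)

lemma atom_gens_col: "d \<in> atom_gens \<Longrightarrow> 1 \<le> gen_col d \<and> gen_col d \<le> q"
  unfolding atom_gens_iff by (auto simp: gen_col_singleton)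

lemma block_gens_col: "d \<in> block_gens \<Longrightarrow> q < gen_col d \<and> gen_col d \<le> k"
proof -
  assume "d \<in> block_gens"
  then obtain b I where bI: "b \<in> blocks" "I \<subseteq> triple (fst b)" "d = block b I"
    unfolding block_gens_iff by blast
  have "gen_col d = fst (snd b)" using bI gen_col_block triple_subset_low_atoms by blast
  then show ?thesis using bI(1) unfolding blocks_def by auto
qed

lemma gens_col: "d \<in> gens \<Longrightarrow> gen_col d \<in> {1..k}"
  unfolding gens_def using atom_gens_col block_gens_col q_less_k by fastforce

lemma blocks_col_eq:
  assumes "q < c" "c \<le> k"
  shows "blocks_col c =
    (\<lambda>(j, l). (j, c, l)) ` (SIGMA j:{1..q}. {..<n_blocks j c}) \<union> (\<lambda>l. (0, c, l)) ` {..<n_plain c}"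
  unfolding blocks_col_def blocks_def using assms by force

lemma blocks_type_eq:
  assumes "1 \<le> i" "i \<le> q"
  shows "blocks_type i = (\<lambda>(c, l). (i, c, l)) ` (SIGMA c:{q+1..k}. {..<n_blocks i c})"
  unfolding blocks_type_def blocks_def using assms by force

lemma sum_blocks_col:
  assumes c: "q < c" "c \<le> k"
  shows "(\<Sum>b\<in>blocks_col c. h (fst b)) = (\<Sum>j=1..q. n_blocks j c * h j) + n_plain c * h 0"
proof -
  let ?A = "(\<lambda>(j, l). (j, c, l)) ` (SIGMA j:{1..q}. {..<n_blocks j c})"
  let ?B = "(\<lambda>l. (0::nat, c, l)) ` {..<n_plain c}"
  have dis: "?A \<inter> ?B = {}" by auto
  have injA: "inj_on (\<lambda>(j, l). (j, c, l)) (SIGMA j:{1..q}. {..<n_blocks j c})"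
    by (auto simp: inj_on_def)
  have injB: "inj_on (\<lambda>l. (0::nat, c, l)) {..<n_plain c}" by (auto simp: inj_on_def)
  have "(\<Sum>b\<in>?A. h (fst b)) = (\<Sum>p\<in>(SIGMA j:{1..q}. {..<n_blocks j c}). h (fst p))"
    by (subst sum.reindex[OF injA]) (simp add: case_prod_beta)
  also have "\<dots> = (\<Sum>(j, l)\<in>(SIGMA j:{1..q}. {..<n_blocks j c}). h j)" by (simp add: case_prod_beta)
  also have "\<dots> = (\<Sum>j=1..q. \<Sum>l<n_blocks j c. h j)" by (rule sum.Sigma[symmetric]) auto
  also have "\<dots> = (\<Sum>j=1..q. n_blocks j c * h j)" by simp
  finally have sA: "(\<Sum>b\<in>?A. h (fst b)) = (\<Sum>j=1..q. n_blocks j c * h j)" .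
  have sB: "(\<Sum>b\<in>?B. h (fst b)) = n_plain c * h 0"
    by (subst sum.reindex[OF injB]) simp
  show ?thesis
    unfolding blocks_col_eq[OF c] using sum.union_disjoint[OF _ _ dis, of "\<lambda>b. h (fst b)"] sA sB
    by simp
qed

lemma card_blocks_type:
  assumes "1 \<le> i" "i \<le> q"
  shows "card (blocks_type i) = n_type i"
proof -
  have "inj_on (\<lambda>(c, l). (i, c, l)) (SIGMA c:{q+1..k}. {..<n_blocks i c})"
    by (auto simp: inj_on_def)
  then show ?thesis
    unfolding blocks_type_eq[OF assms] n_type_def by (simp add: card_image card_SigmaI)
qed

lemma gen_count_low:
  assumes i: "1 \<le> i" "i \<le> q"
  shows "gen_count i = i + 3"
proof -
  have "{d\<in>gens. gen_col d = i} = (\<lambda>t. {low_atom i t}) ` {..<i + 3}"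
  proof (rule set_eqI, rule iffI)
    fix d assume d: "d \<in> {d\<in>gens. gen_col d = i}"
    have "d \<notin> block_gens" using d block_gens_col i by fastforce
    then have "d \<in> atom_gens" using d gens_def by auto
    then obtain j t where jt: "t < j + 3" "d = {low_atom j t}" unfolding atom_gens_iff by blast
    then have "j = i" using d gen_col_singleton by auto
    then show "d \<in> (\<lambda>t. {low_atom i t}) ` {..<i + 3}" using jt by auto
  next
    fix d assume "d \<in> (\<lambda>t. {low_atom i t}) ` {..<i + 3}"
    then obtain t where "t < i + 3" "d = {low_atom i t}" by auto
    then show "d \<in> {d\<in>gens. gen_col d = i}"
      using i unfolding gens_def by (auto simp: gen_col_singleton atom_gens_iff)
  qed
  moreover have "inj_on (\<lambda>t. {low_atom i t}) {..<i + 3}" by (auto simp: inj_on_def)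
  ultimately show ?thesis unfolding gen_count_def by (simp add: card_image)
qed

lemma gens_high_col_eq:
  assumes c: "q < c" "c \<le> k"
  shows "{d\<in>gens. gen_col d = c} = (\<lambda>(b, I). block b I) ` (SIGMA b:blocks_col c. Pow (triple (fst b)))"
proof (rule set_eqI, rule iffI)
  fix d assume d: "d \<in> {d\<in>gens. gen_col d = c}"
  have "d \<notin> atom_gens" using d atom_gens_col c by fastforce
  then have "d \<in> block_gens" using d gens_def by auto
  then obtain b I where bI: "b \<in> blocks" "I \<subseteq> triple (fst b)" "d = block b I"
    unfolding block_gens_iff by blast
  have "gen_col d = fst (snd b)" using bI gen_col_block triple_subset_low_atoms by blast
  then have "b \<in> blocks_col c" using d bI unfolding blocks_col_def by auto
  then show "d \<in> (\<lambda>(b, I). block b I) ` (SIGMA b:blocks_col c. Pow (triple (fst b)))" using bI by auto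
next
  fix d assume "d \<in> (\<lambda>(b, I). block b I) ` (SIGMA b:blocks_col c. Pow (triple (fst b)))"
  then obtain b I where bI: "b \<in> blocks_col c" "I \<subseteq> triple (fst b)" "d = block b I" by auto
  have "gen_col d = fst (snd b)" using bI gen_col_block triple_subset_low_atoms by blast
  moreover have "b \<in> blocks" "fst (snd b) = c" using bI(1) unfolding blocks_col_def by auto
  moreover have "d \<in> block_gens" unfolding block_gens_iff using bI(2,3) \<open>b \<in> blocks\<close> by blast
  ultimately show "d \<in> {d\<in>gens. gen_col d = c}" unfolding gens_def by auto
qed

lemma gen_count_high:
  assumes c: "q < c" "c \<le> k"
  shows "gen_count c = 8 * n_col c + n_plain c"
proof -
  let ?T = "SIGMA b:blocks_col c. Pow (triple (fst b))"
  have inj: "inj_on (\<lambda>(b, I). block b I) ?T"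
  proof (rule inj_onI)
    fix x y assume x: "x \<in> ?T" and y: "y \<in> ?T"
      and e: "(\<lambda>(b, I). block b I) x = (\<lambda>(b, I). block b I) y"
    obtain b I where xb: "x = (b, I)" by fastforce
    obtain b' I' where yb: "y = (b', I')" by fastforce
    have "I \<subseteq> low_atoms" "I' \<subseteq> low_atoms" using x y xb yb triple_subset_low_atoms by auto
    then show "x = y" using block_inj e xb yb by auto
  qed
  have "card ?T = (\<Sum>b\<in>blocks_col c. 2 ^ card (triple (fst b)))"
    using finite_blocks_col by (simp add: card_SigmaI card_Pow)
  also have "\<dots> = (\<Sum>j=1..q. n_blocks j c * 2 ^ card (triple j)) + n_plain c * 2 ^ card (triple 0)"
    by (rule sum_blocks_col[OF c])
  also have "(\<Sum>j=1..q. n_blocks j c * 2 ^ card (triple j)) = (\<Sum>j=1..q. 8 * n_blocks j c)"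
    by (rule sum.cong) (auto simp: card_triple)
  finally show ?thesis
    unfolding gen_count_def gens_high_col_eq[OF c] card_image[OF inj] n_col_def
    by (simp add: sum_distrib_left)
qed

lemma sum_atom_gen_blocks:
  assumes d: "d1 \<in> gens" "d2 \<in> gens" and s: "symdiff d1 d2 = {low_atom j t}"
  obtains b I1 I2 where "b \<in> blocks" "I1 \<subseteq> triple (fst b)" "I2 \<subseteq> triple (fst b)"
    "d1 = block b I1" "d2 = block b I2"
proof -
  have d1: "d1 \<in> atom_gens \<or> d1 \<in> block_gens" and d2: "d2 \<in> atom_gens \<or> d2 \<in> block_gens"
    using d gens_def by auto
  have hub: "hub \<notin> symdiff d1 d2" using s by simp
  have S1: "d1 \<in> block_gens"
  proof (rule ccontr)
    assume "d1 \<notin> block_gens"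
    then have r1: "d1 \<in> atom_gens" using d1 by auto
    show False
    proof (cases "d2 \<in> block_gens")
      case True
      then have "hub \<in> symdiff d1 d2"
        using hub_in_block_gen hub_notin_atom_gen r1 unfolding symdiff_def by blast
      then show False using hub by simp
    next
      case False
      then have "d2 \<in> atom_gens" using d2 by auto
      then obtain u2 where "d2 = {u2}" using atom_gens_singleton by blast
      moreover obtain u1 where "d1 = {u1}" using atom_gens_singleton r1 by blast
      ultimately have "symdiff d1 d2 = (if u1 = u2 then {} else {u1, u2})"
        by (simp add: symdiff_singletons)
      then show False using s by (auto split: if_splits simp: doubleton_eq_iff)
    qed
  qed
  have S2: "d2 \<in> block_gens"
  proof (rule ccontr)
    assume "d2 \<notin> block_gens"
    then have "d2 \<in> atom_gens" using d2 by auto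
    then have "hub \<in> symdiff d1 d2"
      using hub_in_block_gen[OF S1] hub_notin_atom_gen unfolding symdiff_def by blast
    then show False using hub by simp
  qed
  obtain b1 I1 where b1: "d1 = block b1 I1" "b1 \<in> blocks" "I1 \<subseteq> triple (fst b1)"
    using block_gens_block[OF S1] by blast
  obtain b2 I2 where b2: "d2 = block b2 I2" "b2 \<in> blocks" "I2 \<subseteq> triple (fst b2)"
    using block_gens_block[OF S2] by blast
  have U: "I1 \<subseteq> low_atoms" "I2 \<subseteq> low_atoms" using b1 b2 triple_subset_low_atoms by blast+
  have "b1 = b2"
  proof (rule ccontr)
    assume "b1 \<noteq> b2"
    then have "tag b1 \<in> symdiff d1 d2" using tag_in_symdiff_block[OF U] b1 b2 by simp
    then show False using s by simp
  qed
  then show ?thesis using that b1 b2 by blast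
qed

definition low_pair_index :: "nat \<Rightarrow> ((nat \<times> nat \<times> nat) \<times> nat \<times> atom set) set" where
  "low_pair_index i = (SIGMA b:blocks_type i. SIGMA t:{..<3}. Pow (triple i - {low_atom i t}))"

definition low_pair :: "nat \<Rightarrow> (nat \<times> nat \<times> nat) \<times> nat \<times> atom set \<Rightarrow> atom set set" where
  "low_pair i = (\<lambda>(b, t, I). {block b I, block b (insert (low_atom i t) I)})"

lemma sum_pairs_low_eq:
  assumes i: "1 \<le> i" "i \<le> q"
  shows "sum_pairs gens gen_col i = low_pair i ` low_pair_index i"
proof (rule set_eqI, rule iffI)
  fix x assume "x \<in> sum_pairs gens gen_col i"
  then obtain d1 d2 where x: "x = {d1, d2}" "d1 \<in> gens" "d2 \<in> gens" "symdiff d1 d2 \<in> gens"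
    "gen_col (symdiff d1 d2) = i" unfolding sum_pairs_iff by blast
  have "symdiff d1 d2 \<notin> block_gens" using x block_gens_col i by fastforce
  then have "symdiff d1 d2 \<in> atom_gens" using x gens_def by auto
  then obtain j t where jt: "symdiff d1 d2 = {low_atom j t}" unfolding atom_gens_iff by blast
  then have ji: "j = i" using x gen_col_singleton by metis
  obtain b I1 I2 where b: "b \<in> blocks" "I1 \<subseteq> triple (fst b)" "I2 \<subseteq> triple (fst b)"
    "d1 = block b I1" "d2 = block b I2"
    using sum_atom_gen_blocks[OF x(2,3) jt] by blast
  have U: "I1 \<subseteq> low_atoms" "I2 \<subseteq> low_atoms" using b triple_subset_low_atoms by blast+
  have sI: "symdiff I1 I2 = {low_atom i t}" using jt ji b symdiff_block_same[OF U] by simp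
  then have "low_atom i t \<in> triple (fst b)" using b unfolding symdiff_def by blast
  then have fb: "fst b = i" "t < 3" using low_atom_in_triple_iff by auto
  have bT: "b \<in> blocks_type i" using fb b unfolding blocks_type_def by auto
  from symdiff_eq_singleton[OF sI] show "x \<in> low_pair i ` low_pair_index i"
  proof
    assume h: "low_atom i t \<notin> I1 \<and> I2 = insert (low_atom i t) I1"
    have "(b, t, I1) \<in> low_pair_index i" using bT fb h b unfolding low_pair_index_def by auto
    moreover have "x = low_pair i (b, t, I1)" using x b h unfolding low_pair_def by simp
    ultimately show ?thesis by blast
  next
    assume h: "low_atom i t \<notin> I2 \<and> I1 = insert (low_atom i t) I2"
    have "(b, t, I2) \<in> low_pair_index i" using bT fb h b unfolding low_pair_index_def by auto
    moreover have "x = low_pair i (b, t, I2)" using x b h unfolding low_pair_def by (simp add: insert_commute)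
    ultimately show ?thesis by blast
  qed
next
  fix x assume "x \<in> low_pair i ` low_pair_index i"
  then obtain b t I where bt: "b \<in> blocks_type i" "t < 3" "I \<subseteq> triple i - {low_atom i t}"
    "x = {block b I, block b (insert (low_atom i t) I)}"
    unfolding low_pair_def low_pair_index_def by auto
  have b: "b \<in> blocks" "fst b = i" using bt unfolding blocks_type_def by auto
  have uW: "low_atom i t \<in> triple i" using bt i low_atom_in_triple_iff by auto
  have IU: "I \<subseteq> low_atoms" "insert (low_atom i t) I \<subseteq> low_atoms"
    using bt uW triple_subset_low_atoms by blast+
  have "I \<subseteq> triple (fst b)" "insert (low_atom i t) I \<subseteq> triple (fst b)" using b bt uW by auto
  then have "block b I \<in> block_gens" "block b (insert (low_atom i t) I) \<in> block_gens"
    unfolding block_gens_iff using b by blast+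
  then have "block b I \<in> gens" "block b (insert (low_atom i t) I) \<in> gens"
    unfolding gens_def by simp_all
  moreover have "symdiff (block b I) (block b (insert (low_atom i t) I)) = {low_atom i t}"
    using bt symdiff_block_same[OF IU] unfolding symdiff_def by auto
  moreover have "{low_atom i t} \<in> gens" unfolding gens_def using i bt by (auto simp: atom_gens_iff)
  ultimately show "x \<in> sum_pairs gens gen_col i"
    unfolding sum_pairs_iff using bt gen_col_singleton by metis
qed

lemma inj_on_low_pair: "inj_on (low_pair i) (low_pair_index i)"
proof (rule inj_onI)
  fix x y assume x: "x \<in> low_pair_index i" and y: "y \<in> low_pair_index i" and e: "low_pair i x = low_pair i y"
  obtain b t I where xb: "x = (b, t, I)" by (metis prod_cases3)
  obtain b' t' I' where yb: "y = (b', t', I')" by (metis prod_cases3)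
  have I: "I \<subseteq> low_atoms" "insert (low_atom i t) I \<subseteq> low_atoms" "low_atom i t \<notin> I"
    using x xb triple_subset_low_atoms unfolding low_pair_index_def by auto
  have I': "I' \<subseteq> low_atoms" "insert (low_atom i t') I' \<subseteq> low_atoms" "low_atom i t' \<notin> I'"
    using y yb triple_subset_low_atoms unfolding low_pair_index_def by auto
  have "{block b I, block b (insert (low_atom i t) I)} = {block b' I', block b' (insert (low_atom i t') I')}"
    using e xb yb unfolding low_pair_def by simp
  then consider
      "block b I = block b' I'" "block b (insert (low_atom i t) I) = block b' (insert (low_atom i t') I')"
    | "block b I = block b' (insert (low_atom i t') I')" "block b (insert (low_atom i t) I) = block b' I'"
    by (auto simp: doubleton_eq_iff)
  then show "x = y"
  proof cases
    case 1
    then have bI: "b = b' \<and> I = I'" using block_inj[OF I(1) I'(1)] by blast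
    have "insert (low_atom i t) I = insert (low_atom i t') I'" using block_inj[OF I(2) I'(2)] 1 by blast
    then have "low_atom i t \<in> insert (low_atom i t') I" using bI by (metis insertI1)
    then have "t = t'" using I(3) by simp
    then show ?thesis using bI xb yb by simp
  next
    case 2
    have "I = insert (low_atom i t') I'" using block_inj[OF I(1) I'(2)] 2 by blast
    moreover have "insert (low_atom i t) I = I'" using block_inj[OF I(2) I'(1)] 2 by blast
    ultimately show ?thesis using I'(3) by auto
  qed
qed

lemma card_sum_pairs_low:
  assumes i: "1 \<le> i" "i \<le> q"
  shows "card (sum_pairs gens gen_col i) = 12 * n_type i"
proof -
  have "card (triple i - {low_atom i t}) = 2" if "t < 3" for t
    using card_triple[of i] i that low_atom_in_triple_iff by (simp add: card_Diff_singleton)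
  then have "(\<Sum>t<3. 2 ^ card (triple i - {low_atom i t})) = (12::nat)"
    by (simp add: numeral_3_eq_3)
  then have "card (low_pair_index i) = 12 * card (blocks_type i)"
    using finite_blocks_type by (simp add: low_pair_index_def card_SigmaI card_Pow)
  then show ?thesis
    unfolding sum_pairs_low_eq[OF i] card_image[OF inj_on_low_pair] card_blocks_type[OF i] .
qed

definition high_pair_index :: "nat \<Rightarrow> ((nat \<times> nat \<times> nat) \<times> atom \<times> atom set) set" where
  "high_pair_index c = (SIGMA b:blocks_col c. triple (fst b) \<times> Pow (triple (fst b)))"

definition high_pair :: "(nat \<times> nat \<times> nat) \<times> atom \<times> atom set \<Rightarrow> atom set set" where
  "high_pair = (\<lambda>(b, u, I). {{u}, block b I})"

lemma atom_block_sum_in_high_pairs: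
  assumes r: "d1 \<in> atom_gens" and sS: "d2 \<in> block_gens" and s: "symdiff d1 d2 \<in> block_gens"
    and c: "gen_col (symdiff d1 d2) = c"
  shows "{d1, d2} \<in> high_pair ` high_pair_index c"
proof -
  obtain u where u: "d1 = {u}" "u \<in> low_atoms" using atom_gens_singleton[OF r] by blast
  obtain b I where bI: "d2 = block b I" "b \<in> blocks" "I \<subseteq> triple (fst b)"
    using block_gens_block[OF sS] by blast
  obtain b' J where bJ: "symdiff d1 d2 = block b' J" "b' \<in> blocks" "J \<subseteq> triple (fst b')"
    using block_gens_block[OF s] by blast
  have IU: "I \<subseteq> low_atoms" using bI triple_subset_low_atoms by blast
  have sU: "symdiff {u} I \<subseteq> low_atoms" using u IU unfolding symdiff_def by blast
  have JU: "J \<subseteq> low_atoms" using bJ(3) triple_subset_low_atoms by blast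
  have "block b (symdiff {u} I) = block b' J"
    using u bI bJ symdiff_singleton_block[OF u(2) IU] by simp
  then have bb: "b = b'" "symdiff {u} I = J" using block_inj[OF sU JU] by auto
  have "u \<in> I \<union> symdiff {u} I" unfolding symdiff_def by blast
  then have uW: "u \<in> triple (fst b)" using bI(3) bb bJ(3) by blast
  have "gen_col (symdiff d1 d2) = fst (snd b)" unfolding bJ(1) bb(1) by (rule gen_col_block[OF JU])
  then have "b \<in> blocks_col c" using c bI unfolding blocks_col_def by auto
  then have "(b, u, I) \<in> high_pair_index c" using uW bI unfolding high_pair_index_def by auto
  moreover have "{d1, d2} = high_pair (b, u, I)" using u bI unfolding high_pair_def by simp
  ultimately show ?thesis by blast
qed

lemma sum_pairs_high_eq:
  assumes c: "q < c" "c \<le> k"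
  shows "sum_pairs gens gen_col c = high_pair ` high_pair_index c"
proof (rule set_eqI, rule iffI)
  fix x assume "x \<in> sum_pairs gens gen_col c"
  then obtain d1 d2 where x: "x = {d1, d2}" "d1 \<in> gens" "d2 \<in> gens" "symdiff d1 d2 \<in> gens"
    "gen_col (symdiff d1 d2) = c" unfolding sum_pairs_iff by blast
  have "symdiff d1 d2 \<notin> atom_gens" using x atom_gens_col c by fastforce
  then have sS: "symdiff d1 d2 \<in> block_gens" using x gens_def by auto
  have hub: "hub \<in> symdiff d1 d2" using hub_in_block_gen[OF sS] .
  have d: "d1 \<in> atom_gens \<or> d1 \<in> block_gens" "d2 \<in> atom_gens \<or> d2 \<in> block_gens"
    using x gens_def by auto
  show "x \<in> high_pair ` high_pair_index c"
  proof (cases "d1 \<in> block_gens")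
    case True
    then have "d2 \<in> atom_gens"
      using d hub hub_in_block_gen unfolding symdiff_def by blast
    moreover have "symdiff d2 d1 \<in> block_gens" "gen_col (symdiff d2 d1) = c"
      using sS x symdiff_commute by metis+
    ultimately have "{d2, d1} \<in> high_pair ` high_pair_index c"
      using atom_block_sum_in_high_pairs True by blast
    then show ?thesis using x by (simp add: insert_commute)
  next
    case False
    then have "d1 \<in> atom_gens" using d by blast
    moreover have "d2 \<in> block_gens"
      using d hub hub_notin_atom_gen \<open>d1 \<in> atom_gens\<close> unfolding symdiff_def by blast
    ultimately show ?thesis using atom_block_sum_in_high_pairs sS x by blast
  qed
next
  fix x assume "x \<in> high_pair ` high_pair_index c"
  then obtain b u I where bt: "b \<in> blocks_col c" "u \<in> triple (fst b)" "I \<subseteq> triple (fst b)"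
    "x = {{u}, block b I}" unfolding high_pair_def high_pair_index_def by auto
  have b: "b \<in> blocks" "fst (snd b) = c" using bt unfolding blocks_col_def by auto
  have "fst b \<noteq> 0" using bt(2) by (cases "fst b = 0") simp_all
  then have jq: "1 \<le> fst b" "fst b \<le> q" using blocks_low_type b by auto
  obtain t where t: "u = low_atom (fst b) t" "t < 3" using bt \<open>fst b \<noteq> 0\<close> unfolding triple_def by auto
  have "{u} \<in> atom_gens" unfolding atom_gens_iff using jq t by auto
  then have d1: "{u} \<in> gens" unfolding gens_def by simp
  have "block b I \<in> block_gens" unfolding block_gens_iff using b bt by blast
  then have d2: "block b I \<in> gens" unfolding gens_def by simp
  have IU: "I \<subseteq> low_atoms" using bt triple_subset_low_atoms by blast
  have s: "symdiff {u} (block b I) = block b (symdiff {u} I)"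
    using t by (intro symdiff_singleton_block[OF _ IU]) simp
  have sW: "symdiff {u} I \<subseteq> triple (fst b)" using bt unfolding symdiff_def by blast
  then have "block b (symdiff {u} I) \<in> block_gens" unfolding block_gens_iff using b by blast
  then have sD: "symdiff {u} (block b I) \<in> gens" unfolding gens_def s by simp
  have "gen_col (symdiff {u} (block b I)) = c"
    unfolding s using gen_col_block sW triple_subset_low_atoms b by (metis subset_trans)
  then show "x \<in> sum_pairs gens gen_col c" unfolding sum_pairs_iff using bt d1 d2 sD by blast
qed

lemma inj_on_high_pair: "inj_on high_pair (high_pair_index c)"
proof (rule inj_onI)
  fix x y assume x: "x \<in> high_pair_index c" and y: "y \<in> high_pair_index c"
    and e: "high_pair x = high_pair y"
  obtain b u I where xb: "x = (b, u, I)" by (metis prod_cases3)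
  obtain b' u' I' where yb: "y = (b', u', I')" by (metis prod_cases3)
  have I: "I \<subseteq> low_atoms" "u \<in> low_atoms"
    using x xb triple_subset_low_atoms unfolding high_pair_index_def by auto
  have I': "I' \<subseteq> low_atoms" using y yb triple_subset_low_atoms unfolding high_pair_index_def by auto
  have "{{u}, block b I} = {{u'}, block b' I'}" using e xb yb unfolding high_pair_def by simp
  then have "({u} = {u'} \<and> block b I = block b' I') \<or> ({u} = block b' I' \<and> block b I = {u'})"
    by (simp add: doubleton_eq_iff)
  then show "x = y"
  proof
    assume h: "{u} = {u'} \<and> block b I = block b' I'"
    then have "b = b' \<and> I = I'" using block_inj[OF I(1) I'] by blast
    then show ?thesis using h xb yb by simp
  next
    assume "{u} = block b' I' \<and> block b I = {u'}"
    then have "hub \<in> {u}" by simp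
    then show ?thesis using I(2) by simp
  qed
qed

lemma card_sum_pairs_high:
  assumes c: "q < c" "c \<le> k"
  shows "card (sum_pairs gens gen_col c) = 24 * n_col c"
proof -
  have "card (high_pair_index c) = (\<Sum>b\<in>blocks_col c. card (triple (fst b)) * 2 ^ card (triple (fst b)))"
    using finite_blocks_col
    by (simp add: high_pair_index_def card_SigmaI card_Pow card_cartesian_product)
  also have "\<dots> = (\<Sum>j=1..q. n_blocks j c * (card (triple j) * 2 ^ card (triple j)))
      + n_plain c * (card (triple 0) * 2 ^ card (triple 0))"
    by (rule sum_blocks_col[OF c])
  also have "(\<Sum>j=1..q. n_blocks j c * (card (triple j) * 2 ^ card (triple j)))
      = (\<Sum>j=1..q. 24 * n_blocks j c)"
    by (rule sum.cong) (auto simp: card_triple)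
  finally show ?thesis
    unfolding sum_pairs_high_eq[OF c] card_image[OF inj_on_high_pair] n_col_def
    by (simp add: sum_distrib_left)
qed

lemma n_col_Suc:
  assumes "c < k"
  shows "n_col c = n_col (Suc c) + q"
proof -
  have "n_col c = (\<Sum>j=1..q. n_blocks j (Suc c) + 1)"
    unfolding n_col_def by (rule sum.cong) (use assms in \<open>auto simp: n_blocks_def\<close>)
  also have "\<dots> = n_col (Suc c) + (\<Sum>j=1..q. (1::nat))"
    unfolding n_col_def by (simp only: sum.distrib)
  finally show ?thesis by simp
qed

lemma n_type_Suc:
  assumes "j < q"
  shows "n_type j = n_type (Suc j) + (k - q)"
proof -
  have "n_type j = (\<Sum>c=q+1..k. n_blocks (Suc j) c + 1)"
    unfolding n_type_def by (rule sum.cong) (use assms in \<open>auto simp: n_blocks_def\<close>)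
  also have "\<dots> = n_type (Suc j) + (\<Sum>c=q+1..k. (1::nat))"
    unfolding n_type_def by (simp only: sum.distrib)
  finally show ?thesis by simp
qed

lemma n_col_le: "n_col c \<le> q * (P + q + k)"
proof -
  have "n_col c \<le> (\<Sum>j=1..q. P + q + k)"
    unfolding n_col_def by (intro sum_mono) (auto simp: n_blocks_def)
  then show ?thesis by simp
qed

lemma n_type_ge: "(k - q) * P \<le> n_type j"
proof -
  have "(\<Sum>c=q+1..k. P) \<le> n_type j"
    unfolding n_type_def by (intro sum_mono) (auto simp: n_blocks_def)
  then show ?thesis by simp
qed

lemma n_plain_Suc: "q < c \<Longrightarrow> n_plain (Suc c) = n_plain c + (8 * q + 1)"
  unfolding n_plain_def by (simp add: Suc_diff_le)

lemma gen_count_Suc_high: "q < c \<Longrightarrow> c < k \<Longrightarrow> gen_count (Suc c) = gen_count c + 1"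
  using gen_count_high[of c] gen_count_high[of "Suc c"] n_col_Suc n_plain_Suc by simp

lemma incr_pos_seq_gen_count: "incr_pos_seq k gen_count"
  unfolding incr_pos_seq_def
proof (intro conjI ballI)
  fix j assume j: "j \<in> {1..k}"
  show "0 < gen_count j"
    using gen_count_low[of j] gen_count_high[of j] j by (cases "j \<le> q") (auto simp: n_plain_def)
next
  fix j assume j: "j \<in> {1..<k}"
  consider "j < q" | "j = q" | "q < j" by linarith
  then show "gen_count j < gen_count (Suc j)"
  proof cases
    case 3
    then show ?thesis using gen_count_Suc_high[of j] j by simp
  qed (use gen_count_low gen_count_high[of "Suc q"] q_less_k j in \<open>auto simp: n_plain_def\<close>)
qed

lemma nbhd_count_decreasing:
  assumes j: "j \<in> {1..<k}"
  shows "gen_count (Suc j) + card (sum_pairs gens gen_col (Suc j))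
    < gen_count j + card (sum_pairs gens gen_col j)"
proof -
  consider "j < q" | "j = q" | "q < j" by linarith
  then show ?thesis
  proof cases
    case 1
    then show ?thesis
      using gen_count_low[of j] gen_count_low[of "Suc j"] card_sum_pairs_low[of j]
        card_sum_pairs_low[of "Suc j"] n_type_Suc[of j] q_less_k j by auto
  next
    case 2
    \<comment> \<open>the only step that needs 11q < 3k\<close>
    have "32 * q + 1 \<le> 12 * (k - q)" using eleven_q_less by linarith
    then have "(32 * q + 1) * P \<le> 12 * (k - q) * P" by (rule mult_right_mono) simp
    then have "(32 * q + 1) * P \<le> 12 * ((k - q) * P)" by (simp add: mult.assoc)
    then have "32 * q * P + P \<le> 12 * n_type q" using n_type_ge[of q] by (simp add: algebra_simps)
    moreover have "32 * n_col (Suc q) \<le> 32 * q * P + 32 * q * (q + k)"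
      using n_col_le[of "Suc q"] by (simp add: algebra_simps)
    ultimately have "32 * n_col (Suc q) + (8 * q + 1) < q + 3 + 12 * n_type q"
      using P_large by linarith
    then show ?thesis
      using 2 gen_count_low[of q] gen_count_high[of "Suc q"] card_sum_pairs_low[of q]
        card_sum_pairs_high[of "Suc q"] q_pos q_less_k by (simp add: n_plain_def)
  next
    case 3
    then show ?thesis
      using gen_count_Suc_high[of j] card_sum_pairs_high[of j] card_sum_pairs_high[of "Suc j"]
        n_col_Suc[of j] q_pos j by auto
  qed
qed

lemma flip_seq_gen_count: "flip_seq k gen_count"
proof -
  interpret cayley: cayley_graph "\<Union>gens" gens gen_col
    by unfold_locales (use finite_Union_gens empty_notin_gens in auto)
  show ?thesis
    using incr_pos_seq_gen_count gens_col nbhd_count_decreasing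
    by (intro cayley.flip_seq) (auto simp: gen_count_def)
qed

lemma P_less_gen_count_top: "P < gen_count k"
proof -
  have "n_blocks 1 k \<le> n_col k" unfolding n_col_def using q_pos by (intro member_le_sum) auto
  then show ?thesis
    using gen_count_high[of k] q_less_k by (simp add: n_blocks_def n_plain_def)
qed

end

lemma admissible_if_eleven_mul_less:
  assumes q: "1 \<le> q" "11 * q < 3 * k"
  shows "admissible k q"
proof -
  have "\<exists>a. flip_seq k a \<and> a q = q + 3 \<and> N < a k" for N
  proof -
    interpret lower_construction q k "32 * q * (q + k) + 8 * q + N + 1"
      by unfold_locales (use q in auto)
    show ?thesis
      using flip_seq_gen_count gen_count_low[of q] P_less_gen_count_top q by auto
  qed
  then show ?thesis unfolding admissible_def using q by (intro conjI exI[of _ "q + 3"]) auto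
qed

theorem theorem4p1:
  fixes k :: nat
  assumes "k > 3"
  shows "{q. admissible k q} \<noteq> {} \<and>
         max 1 (\<lceil>real k / 4\<rceil> - 1) \<le> int (q_max k) \<and>
         (if k mod 3 = 0 then real (q_max k) < real k / 3
          else int (q_max k) < \<lceil>real k / 2\<rceil>)"
proof -
  define q0 where "q0 = max 1 ((k - 1) div 4)"
  have q0: "admissible k q0"
    using assms unfolding q0_def by (intro admissible_if_eleven_mul_less) auto
  have fin: "finite {q. admissible k q}"
    by (rule finite_subset[of _ "{..k}"]) (auto simp: admissible_def)
  have q0_le: "q0 \<le> q_max k"
    unfolding q_max_def using fin q0 by (simp add: Max_ge)
  have "admissible k (q_max k)"
    unfolding q_max_def using fin q0 by (metis (mono_tags) Max_in empty_iff mem_Collect_eq)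
  then have upper: "3 * q_max k < k" by (rule admissible_imp_three_mul_less)
  have "real k / 4 \<le> real ((k - 1) div 4) + 1" using assms by linarith
  then have "\<lceil>real k / 4\<rceil> \<le> int ((k - 1) div 4) + 1"
    by (metis ceiling_le_iff of_int_1 of_int_add of_int_of_nat_eq)
  then have "max 1 (\<lceil>real k / 4\<rceil> - 1) \<le> int q0" unfolding q0_def by auto
  moreover have "real (q_max k) < real k / 2" using upper by linarith
  then have "int (q_max k) < \<lceil>real k / 2\<rceil>"
    using le_of_int_ceiling[of "real k / 2"] by linarith
  ultimately show ?thesis using q0 q0_le upper by auto
qed

end
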